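(* Suppose the weight function $w$ satisfies $w\le M$ almost everywhere. Then there exists an absolute constant $C>0$ such that for every $n\ge1$ and every $-1<x<1$, $$\lambda(x)\le\frac{CM}{n}\max\left\{\sqrt{1-x^2},\frac1n\right\}.$$
   Context: A weight function is a non-negative integrable function $w$ on $[-1,1]$ with nonzero integral. Fix $n\ge1$. Let $\varphi$ be the orthonormal polynomial of degree $n$ with positive leading coefficient w.r.t. $w(t)\,dt$ on $[-1,1]$ and $\psi$ the orthonormal polynomial of degree $n-1$ with positive leading coefficient w.r.t. $(1-t^2)w(t)\,dt$. For real $a$ let $P_a(t)=\varphi(t)-a(1-t)\psi(t)$ if $a\ge0$, $P_a(t)=\varphi(t)-a(1+t)\psi(t)$ if $a\le0$; its zeros are $-1<\xi_1(a)<\dots<\xi_n(a)<1$. The zeros of $(1-t^2)\psi(t)$ are $-1=\eta_0<\eta_1<\dots<\eta_n=1$. The following node sets each carry a unique quadrature formula with positive weights exact for all polynomials of degree $\le 2n-1$ with respect to $w$: $\{\xi_i(0)\}_{i=1}^n$; $\{\eta_0,\dots,\eta_n\}$; $\{-1\}\cup\{\xi_i(a)\}_i$ for $0<a<\infty$; $\{\xi_i(a)\}_i\cup\{1\}$ for $-\infty<a<0$. Each $x\in(-1,1)$ is a node of exactly one of them, denoted $\Sigma_x$; $\lambda(x)$ is the weight of $x$ in $\Sigma_x$. *)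

theory Defs
  imports "HOL-Analysis.Analysis" "HOL-Computational_Algebra.Polynomial"
begin

definition weight_fun :: "(real \<Rightarrow> real) \<Rightarrow> bool" where
  "weight_fun w \<longleftrightarrow> (\<forall>t\<in>{-1..1}. 0 \<le> w t) \<and> set_integrable lborel {-1..1::real} w
     \<and> (LINT t:{-1..1}|lborel. w t) \<noteq> 0"

definition orthonormal_poly :: "(real \<Rightarrow> real) \<Rightarrow> nat \<Rightarrow> real poly \<Rightarrow> bool" where
  "orthonormal_poly v n p \<longleftrightarrow> degree p = n \<and> lead_coeff p > 0
     \<and> (\<forall>q::real poly. degree q < n \<longrightarrow> (LINT t:{-1..1}|lborel. v t * poly p t * poly q t) = 0)
     \<and> (LINT t:{-1..1}|lborel. v t * (poly p t)^2) = 1"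

definition phi :: "(real \<Rightarrow> real) \<Rightarrow> nat \<Rightarrow> real poly" where
  "phi w n = (THE p. orthonormal_poly w n p)"

definition psi :: "(real \<Rightarrow> real) \<Rightarrow> nat \<Rightarrow> real poly" where
  "psi w n = (THE p. orthonormal_poly (\<lambda>t. (1 - t^2) * w t) (n - 1) p)"

definition Pa :: "(real \<Rightarrow> real) \<Rightarrow> nat \<Rightarrow> real \<Rightarrow> real poly" where
  "Pa w n a = (if a \<ge> 0 then phi w n - smult a ([:1, -1:] * psi w n)
               else phi w n - smult a ([:1, 1:] * psi w n))"

definition pos_quadrature :: "(real \<Rightarrow> real) \<Rightarrow> nat \<Rightarrow> real set \<Rightarrow> (real \<Rightarrow> real) \<Rightarrow> bool" where
  "pos_quadrature w n S c \<longleftrightarrow> finite S \<and> (\<forall>s\<in>S. c s > 0)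
     \<and> (\<forall>p::real poly. degree p \<le> 2*n - 1 \<longrightarrow>
          (\<Sum>s\<in>S. c s * poly p s) = (LINT t:{-1..1}|lborel. w t * poly p t))"

definition node_sets :: "(real \<Rightarrow> real) \<Rightarrow> nat \<Rightarrow> real set set" where
  "node_sets w n =
     {{t. poly (Pa w n 0) t = 0}, {t. poly ([:1, 0, -1:] * psi w n) t = 0}}
     \<union> {insert (-1) {t. poly (Pa w n a) t = 0} | a. a > 0}
     \<union> {insert 1 {t. poly (Pa w n a) t = 0} | a. a < 0}"

text \<open>lambda(x): the weight of x in the unique formula Sigma_x of the family having x as node.\<close>
definition lam :: "(real \<Rightarrow> real) \<Rightarrow> nat \<Rightarrow> real \<Rightarrow> real" where
  "lam w n x = (THE l. \<exists>S c. S \<in> node_sets w n \<and> x \<in> S \<and> pos_quadrature w n S c \<and> c x = l)"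

end

theory Submission
  imports Defs
begin

text \<open>Every \<open>x \<in> (-1, 1)\<close> is a node of a positive rule \<open>\<Sigma>\<^sub>x\<close> with nodes in \<open>[-1, 1]\<close>
  that is exact up to degree \<open>2n - 1\<close>: the rules are interpolatory on the zeros of the
  (quasi-)orthogonal polynomials \<open>\<phi>\<close>, \<open>(1 + sgn a t) P\<^sub>a\<close> and \<open>(1 - t\<^sup>2) \<psi>\<close>, which are simple,
  and their weights are positive by testing with squared Lagrange polynomials. For a polynomial
  \<open>G \<ge> 0\<close> of that degree, dropping the other nodes gives \<open>\<lambda>(x) G(x) \<le> \<integral> G w \<le> M \<integral> G\<close>.
  With \<open>x = cos a\<close> and \<open>D\<close> the Dirichlet kernel of order \<open>r \<approx> n/2\<close>, take
  \<open>G(cos t) = D(t - a)\<^sup>4 + D(t + a)\<^sup>4\<close>: then \<open>G(x) \<ge> (2r + 1)\<^sup>4\<close>, while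
  \<open>\<bar>D(u)\<bar> \<le> min (2r + 1) (1 / \<bar>sin (u/2)\<bar>)\<close> and \<open>sin t \<le> sin a + 2 \<bar>sin ((t - a)/2)\<bar>\<close> give
  \<open>\<integral> G = \<integral>\<^sub>0\<^sup>\<pi> G(cos t) sin t dt = O(r\<^sup>4 sin a + r\<^sup>3)\<close>.\<close>

section \<open>Integrating polynomials against a weight\<close>

definition wint :: "(real \<Rightarrow> real) \<Rightarrow> real poly \<Rightarrow> real" where
  "wint v p = (LINT t:{-1..1}|lborel. v t * poly p t)"

lemma set_integrable_weight_poly:
  assumes "weight_fun v"
  shows "set_integrable lborel {-1..1::real} (\<lambda>t. v t * poly p t)"
proof -
  obtain B where B: "\<And>t. t \<in> {-1..1::real} \<Longrightarrow> \<bar>poly p t\<bar> \<le> B"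
  proof -
    have "compact (poly p ` {-1..1::real})"
      by (intro compact_continuous_image) (auto intro: continuous_intros)
    then show ?thesis using that by (metis compact_imp_bounded bounded_iff image_eqI real_norm_def)
  qed
  have v: "set_integrable lborel {-1..1::real} v" "\<And>t. t \<in> {-1..1} \<Longrightarrow> 0 \<le> v t"
    using assms by (auto simp: weight_fun_def)
  have [measurable]: "poly p \<in> borel_measurable borel"
    by (intro borel_measurable_continuous_onI) (auto intro: continuous_intros)
  have "(\<lambda>t. indicator {-1..1::real} t *\<^sub>R v t) \<in> borel_measurable lborel"
    using v(1) unfolding set_integrable_def by (rule borel_measurable_integrable)
  then have "(\<lambda>t. (indicator {-1..1::real} t *\<^sub>R v t) * poly p t) \<in> borel_measurable lborel"
    by measurable
  then have "set_borel_measurable lborel {-1..1} (\<lambda>t. v t * poly p t)"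
    unfolding set_borel_measurable_def by (simp add: mult.assoc)
  moreover have "AE t in lborel. t \<in> {-1..1} \<longrightarrow> norm (v t * poly p t) \<le> norm (B * v t)"
  proof (intro AE_I2 impI)
    fix t :: real assume t: "t \<in> {-1..1}"
    have "\<bar>v t * poly p t\<bar> \<le> v t * B" using v(2)[OF t] B[OF t]
      by (simp add: abs_mult mult_left_mono)
    then show "norm (v t * poly p t) \<le> norm (B * v t)" by (simp add: mult.commute)
  qed
  moreover have "set_integrable lborel {-1..1} (\<lambda>t. B * v t)"
    using v(1) by simp
  ultimately show ?thesis
    by (metis set_integrable_bound)
qed

lemma wint_add: "weight_fun v \<Longrightarrow> wint v (p + q) = wint v p + wint v q"
  unfolding wint_def using set_integrable_weight_poly[of v p] set_integrable_weight_poly[of v q]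
  by (simp add: distrib_left set_integral_add)

lemma wint_smult: "wint v (smult c p) = c * wint v p"
  unfolding wint_def by (simp add: mult.left_commute)

lemma wint_minus: "wint v (- p) = - wint v p"
  using wint_smult[of v "-1" p] by simp

lemma wint_diff: "weight_fun v \<Longrightarrow> wint v (p - q) = wint v p - wint v q"
  using wint_add[of v p "- q"] by (simp add: wint_minus)

lemma wint_sum: "weight_fun v \<Longrightarrow> wint v (\<Sum>i\<in>S. f i) = (\<Sum>i\<in>S. wint v (f i))"
proof (induction S rule: infinite_finite_induct)
  case (insert x F)
  then show ?case by (simp add: wint_add)
qed (auto simp: wint_def)

lemma wint_mult_weight: "wint (\<lambda>t. poly g t * w t) p = wint w (g * p)"
  unfolding wint_def by (simp add: mult_ac)

lemma wint_pos:
  assumes v: "weight_fun v" and p: "p \<noteq> 0" "\<And>t. t \<in> {-1..1} \<Longrightarrow> 0 \<le> poly p t"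
  shows "0 < wint v p"
proof -
  let ?f = "\<lambda>t. indicator {-1..1::real} t *\<^sub>R (v t * poly p t)"
  have nonneg: "AE t in lborel. 0 \<le> ?f t"
    using v p by (intro AE_I2) (auto simp: weight_fun_def indicator_def)
  have int: "integrable lborel ?f"
    using set_integrable_weight_poly[OF v] unfolding set_integrable_def .
  have "wint v p \<noteq> 0"
  proof
    assume "wint v p = 0"
    then have "AE t in lborel. ?f t = 0"
      using integral_nonneg_eq_0_iff_AE[OF int nonneg] unfolding wint_def set_lebesgue_integral_def
      by simp
    moreover have "AE t in lborel. t \<notin> {x. poly p x = 0}"
      using finite_imp_null_set_lborel[OF poly_roots_finite[OF p(1)]] by (intro AE_not_in) auto
    ultimately have "AE t in lborel. indicator {-1..1::real} t *\<^sub>R v t = 0"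
      by eventually_elim (auto simp: indicator_def)
    then have "(LINT t:{-1..1}|lborel. v t) = 0"
      unfolding set_lebesgue_integral_def by (rule integral_eq_zero_AE)
    then show False using v by (simp add: weight_fun_def)
  qed
  moreover have "0 \<le> wint v p"
    using nonneg unfolding wint_def set_lebesgue_integral_def by (rule integral_nonneg_AE)
  ultimately show ?thesis by simp
qed

lemma wint_square_pos: "weight_fun v \<Longrightarrow> p \<noteq> 0 \<Longrightarrow> 0 < wint v (p * p)"
  by (rule wint_pos) auto

lemma weight_fun_poly_mult:
  assumes "weight_fun w" "g \<noteq> 0" "\<And>t. t \<in> {-1..1} \<Longrightarrow> 0 \<le> poly g t"
  shows "weight_fun (\<lambda>t. poly g t * w t)"
proof -
  have "(LINT t:{-1..1}|lborel. poly g t * w t) = wint w g"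
    unfolding wint_def by (simp add: mult.commute)
  also have "\<dots> > 0" using assms by (intro wint_pos) auto
  finally show ?thesis using assms set_integrable_weight_poly[OF assms(1), of g]
    unfolding weight_fun_def by (auto simp: mult.commute)
qed

section \<open>Orthonormal polynomials\<close>

lemma degree_lt_if_coeff_0:
  fixes r :: "'a::zero poly"
  assumes "degree r \<le> n" "coeff r n = 0" "r \<noteq> 0"
  shows "degree r < n"
  using assms leading_coeff_0_iff le_neq_implies_less by metis

lemma degree_diff_eq_left:
  fixes p q :: "'a::ab_group_add poly"
  shows "degree q < degree p \<Longrightarrow> degree (p - q) = degree p"
  using degree_add_eq_left[of "- q" p] by simp

text \<open>The witness is \<open>g\<close> plus the component of \<open>f - g\<close> along \<open>P\<close>.\<close>
lemma orthogonal_projection_Suc: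
  assumes v: "weight_fun v"
    and P: "degree P = Suc n" "coeff P (Suc n) = 1" "\<And>q. degree q \<le> n \<Longrightarrow> wint v (P * q) = 0"
    and g: "degree g \<le> n" "\<And>q. degree q \<le> n \<Longrightarrow> wint v ((f - g) * q) = 0"
  shows "\<exists>h. degree h \<le> Suc n \<and> (\<forall>q. degree q \<le> Suc n \<longrightarrow> wint v ((f - h) * q) = 0)"
proof -
  have PP: "wint v (P * P) > 0" using wint_square_pos[OF v, of P] P(1) by fastforce
  define \<beta> where "\<beta> = wint v ((f - g) * P) / wint v (P * P)"
  show ?thesis
  proof (intro exI[of _ "g + smult \<beta> P"] conjI allI impI)
    show "degree (g + smult \<beta> P) \<le> Suc n"
      using g(1) P(1) by (intro degree_add_le) auto
    fix q :: "real poly" assume q: "degree q \<le> Suc n"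
    define \<gamma> where "\<gamma> = coeff q (Suc n)"
    define q' where "q' = q - smult \<gamma> P"
    have "degree q' \<le> n"
    proof (cases "q' = 0")
      case False
      have "degree q' \<le> Suc n" unfolding q'_def using q P(1) by (intro degree_diff_le) auto
      moreover have "coeff q' (Suc n) = 0" unfolding q'_def \<gamma>_def using P(2) by simp
      ultimately show ?thesis using degree_lt_if_coeff_0[OF _ _ False] by fastforce
    qed simp
    then have e: "wint v ((f - g) * q') = 0" "wint v (P * q') = 0" using g(2) P(3) by auto
    have "(f - (g + smult \<beta> P)) * q
        = smult \<gamma> ((f - g) * P) + (f - g) * q' - smult (\<beta> * \<gamma>) (P * P) - smult \<beta> (P * q')"
      unfolding q'_def by (simp add: algebra_simps smult_diff_right smult_add_right)
    then show "wint v ((f - (g + smult \<beta> P)) * q) = 0"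
      using v e PP by (simp add: wint_add wint_diff wint_smult \<beta>_def)
  qed
qed

lemma orthogonal_projection_exists:
  assumes v: "weight_fun v"
  shows "\<exists>g. degree g \<le> n \<and> (\<forall>q. degree q \<le> n \<longrightarrow> wint v ((f - g) * q) = 0)"
proof (induction n arbitrary: f)
  case 0
  define c where "c = wint v f / wint v 1"
  have pos: "wint v 1 > 0" using wint_pos[OF v, of 1] by simp
  show ?case
  proof (intro exI[of _ "[:c:]"] conjI allI impI)
    fix q :: "real poly" assume "degree q \<le> 0"
    then obtain d where q: "q = [:d:]" by (metis degree_eq_zeroE le_zero_eq)
    have "(f - [:c:]) * q = smult d f - smult (c * d) 1"
      by (simp add: q smult_diff_right mult.commute)
    then show "wint v ((f - [:c:]) * q) = 0" using v pos
      by (simp only: wint_diff wint_smult) (simp add: c_def)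
  qed simp
next
  case (Suc n)
  obtain g0 where g0: "degree g0 \<le> n" "\<And>q. degree q \<le> n \<Longrightarrow> wint v ((monom 1 (Suc n) - g0) * q) = 0"
    using Suc.IH by blast
  have P: "degree (monom 1 (Suc n) - g0) = Suc n" "coeff (monom 1 (Suc n) - g0) (Suc n) = 1"
    using g0(1) by (simp_all add: degree_monom_eq degree_diff_eq_left coeff_eq_0)
  obtain g where g: "degree g \<le> n" "\<And>q. degree q \<le> n \<Longrightarrow> wint v ((f - g) * q) = 0"
    using Suc.IH by blast
  show ?case using orthogonal_projection_Suc[OF v P g0(2) g] .
qed

lemma monic_orthogonal_poly_exists:
  assumes v: "weight_fun v"
  shows "\<exists>P. degree P = n \<and> lead_coeff P = 1 \<and> (\<forall>q. degree q < n \<longrightarrow> wint v (P * q) = 0)"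
proof (cases n)
  case 0
  then show ?thesis by (intro exI[of _ 1]) auto
next
  case (Suc m)
  obtain g where g: "degree g \<le> m" "\<And>q. degree q \<le> m \<Longrightarrow> wint v ((monom 1 n - g) * q) = 0"
    using orthogonal_projection_exists[OF v] by blast
  then show ?thesis using Suc
    by (intro exI[of _ "monom 1 n - g"])
       (auto simp: degree_monom_eq degree_diff_eq_left coeff_eq_0 less_Suc_eq_le)
qed

lemma orthonormal_poly_iff_wint:
  "orthonormal_poly v n p \<longleftrightarrow> degree p = n \<and> lead_coeff p > 0
     \<and> (\<forall>q. degree q < n \<longrightarrow> wint v (p * q) = 0) \<and> wint v (p * p) = 1"
  unfolding orthonormal_poly_def wint_def by (simp add: mult_ac power2_eq_square)

lemma orthonormal_poly_exists:
  assumes v: "weight_fun v"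
  shows "\<exists>p. orthonormal_poly v n p"
proof -
  obtain P where P: "degree P = n" "lead_coeff P = 1" "\<And>q. degree q < n \<Longrightarrow> wint v (P * q) = 0"
    using monic_orthogonal_poly_exists[OF v] by blast
  have "P \<noteq> 0" using P(2) by (cases "P = 0") auto
  then have PP: "wint v (P * P) > 0" by (rule wint_square_pos[OF v])
  define c where "c = 1 / sqrt (wint v (P * P))"
  have "wint v (smult c P * smult c P) = c\<^sup>2 * wint v (P * P)"
    by (simp add: wint_smult power2_eq_square)
  also have "\<dots> = 1" using PP by (simp add: c_def power_divide)
  finally show ?thesis unfolding orthonormal_poly_iff_wint using P PP
    by (intro exI[of _ "smult c P"]) (auto simp: wint_smult c_def)
qed

lemma orthonormal_poly_unique:
  assumes v: "weight_fun v" and p1: "orthonormal_poly v n p1" and p2: "orthonormal_poly v n p2"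
  shows "p1 = p2"
proof -
  note a1 = p1[unfolded orthonormal_poly_iff_wint] and a2 = p2[unfolded orthonormal_poly_iff_wint]
  define c where "c = lead_coeff p1 / lead_coeff p2"
  have c: "c > 0" using a1 a2 unfolding c_def by auto
  define r where "r = p1 - smult c p2"
  have "r = 0"
  proof (rule ccontr)
    assume r: "r \<noteq> 0"
    have "degree r \<le> n" "coeff r n = 0" unfolding r_def c_def using a1 a2
      by (auto intro: degree_diff_le)
    then have "degree r < n" using degree_lt_if_coeff_0 r by blast
    moreover have "r * r = p1 * r - smult c (p2 * r)"
      by (subst (1) r_def) (simp add: left_diff_distrib)
    ultimately have "wint v (r * r) = 0" using v a1 a2 by (simp add: wint_diff wint_smult)
    then show False using wint_square_pos[OF v r] by simp
  qed
  then have pe: "p1 = smult c p2" unfolding r_def by simp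
  have "1 = c\<^sup>2 * wint v (p2 * p2)"
    using a1 unfolding pe by (simp add: wint_smult power2_eq_square)
  then have "c = 1" using a2 c by (simp add: power2_eq_1_iff)
  then show ?thesis using pe by simp
qed

lemma orthonormal_poly_The:
  "weight_fun v \<Longrightarrow> orthonormal_poly v n (THE p. orthonormal_poly v n p)"
  using orthonormal_poly_exists orthonormal_poly_unique by (metis theI)

section \<open>Sign changes and interior roots\<close>

lemma sign_change_odd_root:
  fixes f :: "real poly"
  assumes "s < t" "poly f s * poly f t < 0"
  shows "\<exists>r. s < r \<and> r < t \<and> poly f r = 0 \<and> odd (order r f)"
  using assms
proof (induction "degree f" arbitrary: f rule: less_induct)
  case less
  obtain r where r: "s < r" "r < t" "poly f r = 0" using poly_IVT[OF less.prems] by blast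
  have f0: "f \<noteq> 0" using less.prems by auto
  define k where "k = order r f"
  obtain g where fe: "f = [:-r,1:] ^ k * g" and "\<not> [:-r,1:] dvd g"
    using order_decomp[OF f0] unfolding k_def by blast
  then have g0: "g \<noteq> 0" and gr: "poly g r \<noteq> 0" using poly_eq_0_iff_dvd by auto
  show ?case
  proof (cases "odd k")
    case False
    have "k \<noteq> 0" using r f0 order_root unfolding k_def by blast
    moreover have "degree f = k + degree g"
      using fe g0 by (simp add: degree_mult_eq degree_linear_power)
    ultimately have "degree g < degree f" by simp
    moreover have "poly g s * poly g t < 0"
    proof -
      have "poly f s * poly f t = ((s - r) * (t - r)) ^ k * (poly g s * poly g t)"
        by (subst (1 2) fe) (simp add: poly_power power_mult_distrib)
      moreover have "((s - r) * (t - r)) ^ k > 0" using False r by (simp add: zero_less_power_eq)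
      ultimately show ?thesis using less.prems(2) False
        by (simp add: zero_less_mult_iff mult_less_0_iff)
    qed
    ultimately obtain r' where r': "s < r'" "r' < t" "poly g r' = 0" "odd (order r' g)"
      using less.hyps[of g] less.prems(1) by blast
    have "r' \<noteq> r" using r' gr by auto
    then have "order r' ([:-r,1:] ^ k) = 0" by (intro order_0I) (simp add: poly_power)
    then have "order r' f = order r' g" using g0 unfolding fe by (subst order_mult) auto
    then show ?thesis using r' fe by auto
  qed (use r k_def in blast)
qed

lemma poly_no_sign_change:
  fixes f :: "real poly"
  assumes "\<And>r. a < r \<Longrightarrow> r < b \<Longrightarrow> poly f r = 0 \<Longrightarrow> even (order r f)"
    and "s \<in> {a..b}" "t \<in> {a..b}"
  shows "0 \<le> poly f s * poly f t"
proof (rule ccontr)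
  assume neg: "\<not> ?thesis"
  have no: "\<not> poly f s' * poly f t' < 0" if "s' < t'" "s' \<in> {a..b}" "t' \<in> {a..b}" for s' t'
    using sign_change_odd_root[OF that(1)] assms(1) that(2,3) by fastforce
  from neg have "s \<noteq> t" by auto
  then consider "s < t" | "t < s" by linarith
  then show False using no[of s t] no[of t s] neg assms(2,3) by cases (auto simp: mult.commute)
qed

lemma poly_nonneg_or_nonpos:
  fixes f :: "real poly"
  assumes "\<And>r. a < r \<Longrightarrow> r < b \<Longrightarrow> poly f r = 0 \<Longrightarrow> even (order r f)"
  shows "(\<forall>t\<in>{a..b}. 0 \<le> poly f t) \<or> (\<forall>t\<in>{a..b}. poly f t \<le> 0)"
  using poly_no_sign_change[OF assms] by (meson linorder_not_le mult_neg_pos)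

definition odd_roots :: "real poly \<Rightarrow> real set" where
  "odd_roots p = {r. -1 < r \<and> r < 1 \<and> poly p r = 0 \<and> odd (order r p)}"

definition root_poly :: "real set \<Rightarrow> real poly" where
  "root_poly R = (\<Prod>r\<in>R. [:-r,1:])"

lemma finite_odd_roots: "p \<noteq> 0 \<Longrightarrow> finite (odd_roots p)"
  unfolding odd_roots_def by (rule finite_subset[OF _ poly_roots_finite]) auto

lemma poly_root_poly: "poly (root_poly R) t = (\<Prod>r\<in>R. t - r)"
  unfolding root_poly_def by (simp add: poly_prod)

lemma root_poly_nonzero [simp]: "root_poly R \<noteq> 0"
  unfolding root_poly_def by (cases "finite R") (auto simp: prod_zero_iff)

lemma degree_root_poly: "finite R \<Longrightarrow> degree (root_poly R) = card R"
  unfolding root_poly_def by (subst degree_prod_eq_sum_degree) auto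

lemma lead_coeff_root_poly [simp]: "lead_coeff (root_poly R) = 1"
  unfolding root_poly_def by (simp add: lead_coeff_prod)

lemma order_root_poly: "finite R \<Longrightarrow> order r (root_poly R) = (if r \<in> R then 1 else 0)"
proof (induction R rule: finite_induct)
  case (insert x F)
  have "order r (root_poly (insert x F)) = order r ([:-x,1:] * root_poly F)"
    by (simp only: root_poly_def prod.insert[OF insert(1,2)])
  also have "\<dots> = order r [:-x,1:] + order r (root_poly F)"
    using root_poly_nonzero[of F] by (intro order_mult) (simp del: mult_pCons_left)
  moreover have "order r [:-x,1:] = (if r = x then 1 else 0)"
    using order_power_n_n[of x 1] by (auto intro: order_0I)
  ultimately show ?case using insert by auto
qed (simp add: root_poly_def)

lemma root_poly_dvd:
  fixes p :: "real poly"
  assumes "finite Z" "\<And>r. r \<in> Z \<Longrightarrow> poly p r = 0"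
  shows "root_poly Z dvd p"
  using assms
proof (induction Z arbitrary: p rule: finite_induct)
  case (insert x F)
  obtain g where g: "p = root_poly F * g" using insert by blast
  have "poly (root_poly F) x \<noteq> 0" using insert(1,2) by (simp add: poly_root_poly)
  then have "poly g x = 0" using g insert(4) by (metis insertI1 mult_eq_0_iff poly_mult)
  then obtain g' where "g = [:-x,1:] * g'" using poly_eq_0_iff_dvd by blast
  then have "p = root_poly (insert x F) * g'"
    using g by (simp only: root_poly_def prod.insert[OF insert(1,2)] mult_ac)
  then show ?case by (rule dvdI)
qed (simp add: root_poly_def)

lemma even_order_mult_odd_roots:
  assumes "p \<noteq> 0" "-1 < r" "r < 1"
  shows "even (order r (p * root_poly (odd_roots p)))"
proof -
  have "p * root_poly (odd_roots p) \<noteq> 0" using assms by simp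
  then have "order r (p * root_poly (odd_roots p)) = order r p + (if r \<in> odd_roots p then 1 else 0)"
    using assms by (simp add: order_mult order_root_poly finite_odd_roots)
  then show ?thesis using assms order_root[of p r] by (auto simp: odd_roots_def)
qed

text \<open>An orthogonal polynomial changes sign at enough points: otherwise multiplying it by the
  product over its sign changes gives a polynomial of constant sign with vanishing integral.\<close>
lemma card_odd_roots_ge:
  assumes v: "weight_fun v" and p: "p \<noteq> 0"
    and orth: "\<And>q. degree q < m \<Longrightarrow> wint v (p * q) = 0"
  shows "m \<le> card (odd_roots p)"
proof (rule ccontr)
  assume less: "\<not> m \<le> card (odd_roots p)"
  define f where "f = p * root_poly (odd_roots p)"
  have f0: "f \<noteq> 0" using p by (simp add: f_def)
  have "wint v f = 0"
    unfolding f_def using less by (intro orth) (simp add: degree_root_poly finite_odd_roots p)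
  moreover consider "\<forall>t\<in>{-1..1}. 0 \<le> poly f t" | "\<forall>t\<in>{-1..1}. poly f t \<le> 0"
    using poly_nonneg_or_nonpos[of "-1" 1 f] even_order_mult_odd_roots[OF p] by (auto simp: f_def)
  then have "0 < wint v f \<or> 0 < wint v (- f)"
    by cases (use f0 in \<open>auto intro!: wint_pos[OF v]\<close>)
  ultimately show False by (auto simp: wint_minus)
qed

lemma poly_root_poly_minus_one: "poly (root_poly R) (-1) = (-1) ^ card R * (\<Prod>r\<in>R. 1 + r)"
  unfolding poly_root_poly prod_uminus[symmetric] by simp

lemma root_poly_endpoint_signs:
  assumes "R \<subseteq> {-1<..<1}"
  shows "0 < poly (root_poly R) 1" "0 < (-1) ^ card R * poly (root_poly R) (-1)"
proof -
  show "0 < poly (root_poly R) 1" using assms by (auto simp: poly_root_poly intro!: prod_pos)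
  have "(-1::real) ^ card R * (-1) ^ card R = 1" by (simp flip: power_mult_distrib)
  then show "0 < (-1) ^ card R * poly (root_poly R) (-1)"
    using assms by (auto simp: poly_root_poly_minus_one mult.assoc[symmetric] intro!: prod_pos)
qed

text \<open>For a polynomial orthogonal to one degree less, the signs at the endpoints supply the
  missing sign change.\<close>
lemma card_odd_roots_ge_endpoints:
  assumes v: "weight_fun v" and p: "p \<noteq> 0" "n \<ge> 1"
    and orth: "\<And>q. degree q < n - 1 \<Longrightarrow> wint v (p * q) = 0"
    and signs: "0 < poly p 1" "0 < (-1) ^ n * poly p (-1)"
  shows "n \<le> card (odd_roots p)"
proof (rule ccontr)
  assume "\<not> n \<le> card (odd_roots p)"
  moreover have "n - 1 \<le> card (odd_roots p)" by (rule card_odd_roots_ge[OF v p(1) orth])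
  ultimately have card: "card (odd_roots p) = n - 1" by linarith
  define R where "R = odd_roots p"
  have sR: "R \<subseteq> {-1<..<1}" by (auto simp: R_def odd_roots_def)
  define f where "f = p * root_poly R"
  have "0 \<le> poly f 1 * poly f (-1)"
    using even_order_mult_odd_roots[OF p(1)]
    by (intro poly_no_sign_change[of "-1" 1]) (auto simp: f_def R_def)
  moreover have "0 < poly f 1"
    using signs(1) root_poly_endpoint_signs(1)[OF sR] by (simp add: f_def)
  moreover have "poly f (-1) < 0"
  proof -
    have "(-1::real) ^ n = - ((-1) ^ (n - 1))" using p(2) by (cases n) auto
    then have "poly f (-1)
        = - (((-1) ^ n * poly p (-1)) * ((-1) ^ card R * poly (root_poly R) (-1)))"
      using card by (simp add: f_def R_def)
    then show ?thesis using signs(2) root_poly_endpoint_signs(2)[OF sR] by simp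
  qed
  ultimately show False by (metis mult_pos_neg not_le)
qed

abbreviation zeros :: "real poly \<Rightarrow> real set" where
  "zeros p \<equiv> {t. poly p t = 0}"

definition interior_roots :: "real poly \<Rightarrow> bool" where
  "interior_roots p \<longleftrightarrow> p \<noteq> 0 \<and> zeros p \<subseteq> {-1<..<1} \<and> card (zeros p) = degree p"

lemma interior_roots_zeros:
  "interior_roots p \<Longrightarrow> finite (zeros p) \<and> zeros p \<subseteq> {-1<..<1} \<and> card (zeros p) = degree p"
  using poly_roots_finite by (auto simp: interior_roots_def)

lemma interior_rootsI:
  assumes p: "p \<noteq> 0" and card: "degree p \<le> card (odd_roots p)"
  shows "interior_roots p"
proof -
  have sub: "odd_roots p \<subseteq> zeros p" by (auto simp: odd_roots_def)
  have fin: "finite (zeros p)" by (rule poly_roots_finite[OF p])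
  have "card (zeros p) \<le> degree p" by (rule card_poly_roots_bound[OF p])
  moreover have "card (odd_roots p) \<le> card (zeros p)" by (rule card_mono[OF fin sub])
  ultimately have "card (odd_roots p) = card (zeros p)" "card (zeros p) = degree p"
    using card by linarith+
  moreover have "odd_roots p \<subseteq> {-1<..<1}" by (auto simp: odd_roots_def)
  ultimately show ?thesis using p card_subset_eq[OF fin sub] by (simp add: interior_roots_def)
qed

lemma interior_roots_factor:
  assumes "interior_roots p"
  shows "p = smult (lead_coeff p) (root_poly (zeros p))"
proof -
  let ?Z = "zeros p"
  have p: "p \<noteq> 0" and fZ: "finite ?Z" and cZ: "card ?Z = degree p"
    using assms poly_roots_finite by (auto simp: interior_roots_def)
  obtain g where g: "p = root_poly ?Z * g" using root_poly_dvd[OF fZ, of p] by auto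
  then have "g \<noteq> 0" using p by auto
  then have "degree g = 0" using g cZ degree_mult_eq[of "root_poly ?Z" g]
    by (simp add: degree_root_poly[OF fZ])
  then obtain c where "g = [:c:]" by (metis degree_eq_zeroE)
  then have pc: "p = smult c (root_poly ?Z)" using g by simp
  moreover have "lead_coeff p = c" using arg_cong[OF pc, of lead_coeff] by simp
  ultimately show ?thesis by simp
qed

lemma interior_roots_endpoint_signs:
  assumes "interior_roots p" "lead_coeff p > 0"
  shows "0 < poly p 1" "0 < (-1) ^ degree p * poly p (-1)"
proof -
  obtain R where R: "R \<subseteq> {-1<..<1}" "card R = degree p" "p = smult (lead_coeff p) (root_poly R)"
    using assms(1) interior_roots_factor by (auto simp: interior_roots_def)
  then show "0 < poly p 1" "0 < (-1) ^ degree p * poly p (-1)"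
    using root_poly_endpoint_signs[OF R(1)] assms(2)
    by (metis (no_types, lifting) mult.left_commute mult_pos_pos poly_smult)+
qed

section \<open>Interpolatory quadrature\<close>

definition lagrange_basis :: "real set \<Rightarrow> real \<Rightarrow> real poly" where
  "lagrange_basis S s = smult (1 / (\<Prod>u\<in>S - {s}. s - u)) (root_poly (S - {s}))"

lemma poly_lagrange_basis:
  "poly (lagrange_basis S s) t = (\<Prod>u\<in>S - {s}. t - u) / (\<Prod>u\<in>S - {s}. s - u)"
  unfolding lagrange_basis_def by (simp add: poly_root_poly)

lemma poly_lagrange_basis_self [simp]: "finite S \<Longrightarrow> poly (lagrange_basis S s) s = 1"
  unfolding poly_lagrange_basis by (simp add: prod_zero_iff)

lemma poly_lagrange_basis_other: "finite S \<Longrightarrow> u \<in> S \<Longrightarrow> u \<noteq> s \<Longrightarrow> poly (lagrange_basis S s) u = 0"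
  unfolding poly_lagrange_basis by (auto simp: prod_zero_iff)

lemma degree_lagrange_basis: "finite S \<Longrightarrow> s \<in> S \<Longrightarrow> degree (lagrange_basis S s) = card S - 1"
  unfolding lagrange_basis_def by (simp add: prod_zero_iff degree_root_poly)

lemma lagrange_interpolation:
  assumes S: "finite S" and r: "degree r < card S"
  shows "r = (\<Sum>s\<in>S. smult (poly r s) (lagrange_basis S s))"
proof (rule ccontr)
  let ?I = "\<Sum>s\<in>S. smult (poly r s) (lagrange_basis S s)"
  assume "r \<noteq> ?I"
  then have d0: "r - ?I \<noteq> 0" by simp
  have "degree ?I \<le> card S - 1"
    using S by (intro degree_sum_le)
      (auto intro: order_trans[OF degree_smult_le] simp: degree_lagrange_basis)
  then have deg: "degree (r - ?I) < card S" using r by (intro degree_diff_less) auto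
  have "poly ?I u = poly r u" if "u \<in> S" for u
  proof -
    have "poly ?I u = (\<Sum>s\<in>S. poly r s * poly (lagrange_basis S s) u)" by (simp add: poly_sum)
    also have "\<dots> = (\<Sum>s\<in>S. if s = u then poly r s else 0)"
      using S that by (intro sum.cong) (auto simp: poly_lagrange_basis_other)
    finally show ?thesis using S that by simp
  qed
  then have "S \<subseteq> {x. poly (r - ?I) x = 0}" by auto
  then have "card S \<le> card {x. poly (r - ?I) x = 0}"
    by (rule card_mono[OF poly_roots_finite[OF d0]])
  also have "\<dots> \<le> degree (r - ?I)" by (rule card_poly_roots_bound[OF d0])
  finally show False using deg by simp
qed

definition quadrature_exact :: "(real \<Rightarrow> real) \<Rightarrow> nat \<Rightarrow> real set \<Rightarrow> (real \<Rightarrow> real) \<Rightarrow> bool" where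
  "quadrature_exact w n S c \<longleftrightarrow>
     (\<forall>p. degree p \<le> 2 * n - 1 \<longrightarrow> (\<Sum>s\<in>S. c s * poly p s) = wint w p)"

lemma pos_quadrature_iff:
  "pos_quadrature w n S c \<longleftrightarrow> finite S \<and> (\<forall>s\<in>S. 0 < c s) \<and> quadrature_exact w n S c"
  unfolding pos_quadrature_def quadrature_exact_def wint_def by blast

definition interpolatory_weight :: "(real \<Rightarrow> real) \<Rightarrow> real set \<Rightarrow> real \<Rightarrow> real" where
  "interpolatory_weight w S s = wint w (lagrange_basis S s)"

text \<open>Dividing by the node polynomial D, the interpolatory rule integrates the remainder exactly,
  and the quotient term integrates to zero by the orthogonality of D.\<close>
lemma interpolatory_quadrature_exact:
  assumes w: "weight_fun w" and S: "finite S" "S \<noteq> {}"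
    and D: "degree D = card S" "\<And>s. s \<in> S \<Longrightarrow> poly D s = 0"
    and orth: "\<And>q. card S + degree q \<le> 2 * n - 1 \<Longrightarrow> wint w (D * q) = 0"
  shows "quadrature_exact w n S (interpolatory_weight w S)"
  unfolding quadrature_exact_def interpolatory_weight_def
proof (intro allI impI)
  fix p :: "real poly" assume p: "degree p \<le> 2 * n - 1"
  have D0: "D \<noteq> 0" using D(1) S card_0_eq by force
  define q where "q = p div D"
  define r where "r = p mod D"
  have pe: "p = D * q + r" unfolding q_def r_def by (simp add: mult.commute)
  have r: "degree r < card S"
    using degree_mod_less[OF D0, of p] D(1) S card_0_eq unfolding r_def by force
  have "(\<Sum>s\<in>S. wint w (lagrange_basis S s) * poly p s)
      = (\<Sum>s\<in>S. poly r s * wint w (lagrange_basis S s))"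
    using D(2) by (intro sum.cong) (auto simp: pe)
  also have "\<dots> = wint w (\<Sum>s\<in>S. smult (poly r s) (lagrange_basis S s))"
    using w by (simp add: wint_sum wint_smult)
  also have "\<dots> = wint w r" by (simp only: lagrange_interpolation[OF S(1) r, symmetric])
  also have "wint w r = wint w p"
  proof (cases "q = 0")
    case False
    then have "degree p = card S + degree q"
      unfolding pe using r D0 D(1) by (simp add: degree_add_eq_left degree_mult_eq)
    then show ?thesis using w orth p by (simp add: pe wint_add)
  qed (simp add: pe)
  finally show "(\<Sum>s\<in>S. wint w (lagrange_basis S s) * poly p s) = wint w p" .
qed

lemma quadrature_weight_eq:
  assumes "quadrature_exact w n S c" "finite S" "s \<in> S"
    and "degree g \<le> 2 * n - 1" "\<And>u. u \<in> S \<Longrightarrow> u \<noteq> s \<Longrightarrow> poly g u = 0"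
  shows "c s * poly g s = wint w g"
proof -
  have "wint w g = (\<Sum>u\<in>S. c u * poly g u)" using assms(1,4) unfolding quadrature_exact_def by simp
  also have "\<dots> = (\<Sum>u\<in>S. if u = s then c s * poly g s else 0)"
    using assms(5) by (intro sum.cong) auto
  also have "\<dots> = c s * poly g s" using assms(2,3) by simp
  finally show ?thesis by simp
qed

lemma quadrature_weight_pos:
  assumes w: "weight_fun w" and ex: "quadrature_exact w n S c" "finite S" "s \<in> S"
    and g: "degree g \<le> 2 * n - 1" "\<And>u. u \<in> S \<Longrightarrow> u \<noteq> s \<Longrightarrow> poly g u = 0"
      "0 < poly g s" "\<And>t. t \<in> {-1..1} \<Longrightarrow> 0 \<le> poly g t"
  shows "0 < c s"
proof -
  have "c s * poly g s = wint w g" by (rule quadrature_weight_eq[OF ex g(1,2)])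
  moreover have "0 < wint w g" using g(3,4) by (intro wint_pos[OF w]) auto
  ultimately show ?thesis using g(3) by (metis zero_less_mult_pos2)
qed

lemma quadrature_weight_pos_factor:
  assumes w: "weight_fun w" and ex: "quadrature_exact w n S c" "finite S" "s \<in> S"
    and deg: "degree L + 2 * degree Q \<le> 2 * n - 1"
    and van: "\<And>u. u \<in> S \<Longrightarrow> u \<noteq> s \<Longrightarrow> poly L u = 0 \<or> poly Q u = 0"
    and L: "0 < poly L s" "\<And>t. t \<in> {-1..1} \<Longrightarrow> 0 \<le> poly L t" and Q: "poly Q s \<noteq> 0"
  shows "0 < c s"
proof (rule quadrature_weight_pos[OF w ex, of "L * Q\<^sup>2"])
  show "degree (L * Q\<^sup>2) \<le> 2 * n - 1"
    using deg degree_mult_le[of L "Q\<^sup>2"] degree_power_le[of Q 2] by simp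
qed (use van L Q in auto)

lemma quadrature_weight_unique:
  assumes "quadrature_exact w n S c" "finite S" "card S \<le> 2 * n" "x \<in> S"
  shows "c x = interpolatory_weight w S x"
  using quadrature_weight_eq[OF assms(1,2,4), of "lagrange_basis S x"] assms(2,3,4)
  by (simp add: degree_lagrange_basis poly_lagrange_basis_other interpolatory_weight_def)

lemma weight_bound_pos:
  assumes w: "weight_fun w" and M: "AE t in lborel. t \<in> {-1..1} \<longrightarrow> w t \<le> M"
  shows "0 < M"
proof -
  have "0 < wint w 1" using wint_pos[OF w, of 1] by simp
  also have "wint w 1 \<le> (LINT t:{-1..1::real}|lborel. M)"
    unfolding wint_def using set_integrable_weight_poly[OF w, of 1] M
    by (intro set_integral_mono_AE) (auto simp: set_integrable_def)
  also have "\<dots> = 2 * M" by (simp add: set_integral_const)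
  finally show ?thesis by simp
qed

text \<open>Drop the other (nonnegative) terms of the rule applied to \<open>G\<close>, then bound \<open>w\<close> by \<open>M\<close>.\<close>
lemma pos_quadrature_weight_le:
  assumes w: "weight_fun w" and M: "AE t in lborel. t \<in> {-1..1} \<longrightarrow> w t \<le> M"
    and quad: "pos_quadrature w n S c" "S \<subseteq> {-1..1}" "x \<in> S"
    and G: "degree G \<le> 2 * n - 1" "\<And>t. t \<in> {-1..1} \<Longrightarrow> 0 \<le> poly G t"
  shows "c x * poly G x \<le> M * integral {-1..1} (poly G)"
proof -
  have S: "finite S" "\<And>s. s \<in> S \<Longrightarrow> 0 < c s" and ex: "quadrature_exact w n S c"
    using quad(1) by (auto simp: pos_quadrature_iff)
  have intG: "set_integrable lborel {-1..1::real} (poly G)"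
    by (rule borel_integrable_atLeastAtMost') (auto intro: continuous_intros)
  have "0 \<le> c s * poly G s" if "s \<in> S" for s
    using S(2)[OF that] G(2)[of s] quad(2) that by fastforce
  then have "c x * poly G x \<le> (\<Sum>s\<in>S. c s * poly G s)"
    using S(1) quad(3) by (intro member_le_sum) auto
  also have "\<dots> = wint w G" using ex G(1) unfolding quadrature_exact_def by simp
  also have "\<dots> \<le> (LINT t:{-1..1}|lborel. M * poly G t)"
    unfolding wint_def using set_integrable_weight_poly[OF w, of G] intG M
    by (intro set_integral_mono_AE) (auto elim!: AE_mp intro!: mult_right_mono G(2))
  also have "\<dots> = M * integral {-1..1} (poly G)"
    using set_borel_integral_eq_integral(2)[OF intG] by simp
  finally show ?thesis .
qed

section \<open>The polynomials \<open>\<phi>\<close>, \<open>\<psi>\<close> and \<open>P\<^sub>a\<close>\<close>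

lemma poly_one_minus_square: "poly [:1, 0, -1:] t = 1 - (t::real)\<^sup>2"
  by (simp add: power2_eq_square)

lemma poly_one_minus_square_nonneg: "t \<in> {-1..1} \<Longrightarrow> 0 \<le> poly [:1, 0, -1:] (t::real)"
  unfolding poly_one_minus_square by (simp add: abs_square_le_1 abs_le_iff)

lemma degree_linear_mult_le: "degree ([:c, d:] * q) \<le> Suc (degree q)"
  using degree_mult_le[of "[:c, d:]" q] by (auto simp: degree_pCons_eq_if split: if_splits)

locale node_family =
  fixes w :: "real \<Rightarrow> real" and n :: nat
  assumes weight: "weight_fun w" and n_pos: "1 \<le> n"
begin

abbreviation "\<phi> \<equiv> phi w n"
abbreviation "\<psi> \<equiv> psi w n"

lemma weight_one_minus_square: "weight_fun (\<lambda>t. (1 - t\<^sup>2) * w t)"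
  unfolding poly_one_minus_square[symmetric]
  by (rule weight_fun_poly_mult[OF weight])
     (auto simp del: poly_pCons intro: poly_one_minus_square_nonneg)

lemma phi_orthonormal: "orthonormal_poly w n \<phi>"
  unfolding phi_def by (rule orthonormal_poly_The[OF weight])

lemma psi_orthonormal: "orthonormal_poly (\<lambda>t. (1 - t\<^sup>2) * w t) (n - 1) \<psi>"
  unfolding psi_def by (rule orthonormal_poly_The[OF weight_one_minus_square])

lemma degree_phi: "degree \<phi> = n" and lead_coeff_phi: "0 < lead_coeff \<phi>"
  and phi_orth: "degree q < n \<Longrightarrow> wint w (\<phi> * q) = 0"
  using phi_orthonormal unfolding orthonormal_poly_iff_wint by auto

lemma degree_psi: "degree \<psi> = n - 1" and lead_coeff_psi: "0 < lead_coeff \<psi>"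
  using psi_orthonormal by (auto simp: orthonormal_poly_iff_wint)

lemma psi_orth:
  assumes "degree q < n - 1"
  shows "wint w ([:1, 0, -1:] * \<psi> * q) = 0"
proof -
  have "wint (\<lambda>t. (1 - t\<^sup>2) * w t) (\<psi> * q) = 0"
    using psi_orthonormal assms unfolding orthonormal_poly_iff_wint by blast
  then show ?thesis
    by (simp only: poly_one_minus_square[symmetric] wint_mult_weight mult.assoc)
qed

lemma phi_nonzero: "\<phi> \<noteq> 0" and psi_nonzero: "\<psi> \<noteq> 0"
  using lead_coeff_phi lead_coeff_psi by auto

lemma interior_roots_phi: "interior_roots \<phi>"
  using card_odd_roots_ge[OF weight phi_nonzero phi_orth]
  by (intro interior_rootsI[OF phi_nonzero]) (simp add: degree_phi)

lemma interior_roots_psi: "interior_roots \<psi>"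
  using psi_orthonormal card_odd_roots_ge[OF weight_one_minus_square psi_nonzero]
  by (intro interior_rootsI[OF psi_nonzero]) (simp add: orthonormal_poly_iff_wint)

lemma phi_psi_endpoint_signs:
  "0 < poly \<phi> 1" "0 < poly \<psi> 1" "poly \<phi> (-1) * poly \<psi> (-1) < 0"
proof -
  note \<phi> = interior_roots_endpoint_signs[OF interior_roots_phi lead_coeff_phi]
  note \<psi> = interior_roots_endpoint_signs[OF interior_roots_psi lead_coeff_psi]
  show "0 < poly \<phi> 1" "0 < poly \<psi> 1" using \<phi>(1) \<psi>(1) .
  have "(-1::real) ^ n * (-1) ^ (n - 1) = -1" using n_pos by (cases n) auto
  then have "poly \<phi> (-1) * poly \<psi> (-1)
      = - (((-1) ^ n * poly \<phi> (-1)) * ((-1) ^ (n - 1) * poly \<psi> (-1)))"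
    by (metis (no_types, opaque_lifting) minus_mult_minus mult.left_commute mult.right_neutral
        mult_minus_left)
  then show "poly \<phi> (-1) * poly \<psi> (-1) < 0"
    using \<phi>(2) \<psi>(2) by (simp add: degree_phi degree_psi)
qed

lemma Pa_eq: "Pa w n a = \<phi> - smult a ([:1, - sgn a:] * \<psi>)"
proof -
  consider "a < 0" | "a = 0" | "0 < a" by linarith
  then show ?thesis by cases (simp_all add: Pa_def)
qed

lemma poly_Pa: "poly (Pa w n a) t = poly \<phi> t - a * (1 - sgn a * t) * poly \<psi> t"
  by (simp add: Pa_eq algebra_simps)

lemma degree_Pa: "degree (Pa w n a) = n" and lead_coeff_Pa: "0 < lead_coeff (Pa w n a)"
proof -
  have d: "degree ([:1, - sgn a:] * \<psi>) \<le> n"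
    using degree_linear_mult_le[of 1 "- sgn a" \<psi>] degree_psi n_pos by simp
  have "a * coeff ([:1, - sgn a:] * \<psi>) n = - \<bar>a\<bar> * lead_coeff \<psi>"
  proof (cases "a = 0")
    case False
    then have "degree [:1, - sgn a:] = 1" by (simp add: sgn_0_0)
    then have "coeff ([:1, - sgn a:] * \<psi>) n = - sgn a * lead_coeff \<psi>"
      using coeff_mult_degree_sum[of "[:1, - sgn a:]" \<psi>] degree_psi n_pos by simp
    then show ?thesis by (simp add: abs_sgn)
  qed simp
  then have c: "coeff (Pa w n a) n = lead_coeff \<phi> + \<bar>a\<bar> * lead_coeff \<psi>"
    by (simp add: Pa_eq degree_phi)
  have "0 < coeff (Pa w n a) n"
    unfolding c using lead_coeff_phi lead_coeff_psi by (simp add: add_pos_nonneg)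
  moreover have "degree (Pa w n a) \<le> n"
    unfolding Pa_eq using d degree_phi
    by (intro degree_diff_le) (auto intro: order_trans[OF degree_smult_le])
  ultimately show "degree (Pa w n a) = n" by (metis le_antisym le_degree less_irrefl)
  then show "0 < lead_coeff (Pa w n a)" using \<open>0 < coeff (Pa w n a) n\<close> by simp
qed

lemma Pa_nonzero: "Pa w n a \<noteq> 0"
  using lead_coeff_Pa[of a] by (metis leading_coeff_0_iff less_irrefl)

text \<open>Multiplied by the complementary linear factor, \<open>P\<^sub>a\<close> becomes \<open>\<phi>\<close> times a lower-degree
  factor minus a multiple of \<open>(1 - t\<^sup>2) \<psi>\<close>.\<close>
lemma Pa_quasi_orth:
  assumes "degree q < n - 1"
  shows "wint w ([:1, sgn a:] * Pa w n a * q) = 0"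
proof -
  have deg: "degree ([:1, sgn a:] * q) < n"
    using degree_linear_mult_le[of 1 "sgn a" q] assms by linarith
  have L: "smult a ([:1, sgn a:] * ([:1, - sgn a:] * r)) = smult a ([:1, 0, -1:] * r)" for r
  proof -
    have "smult a ([:1, sgn a:] * [:1, - sgn a:]) = smult a [:1, 0, -1:]"
      by (cases a "0::real" rule: linorder_cases) simp_all
    then show ?thesis by (metis mult.assoc mult_smult_left)
  qed
  have "[:1, sgn a:] * Pa w n a * q = \<phi> * ([:1, sgn a:] * q) - smult a ([:1, 0, -1:] * \<psi> * q)"
    unfolding Pa_eq by (simp only: right_diff_distrib left_diff_distrib mult_smult_left
      mult_smult_right mult.assoc L mult.left_commute[of "[:1, sgn a:]" \<phi>])
  then show ?thesis using phi_orth[OF deg] psi_orth[OF assms]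
    by (simp only: wint_diff[OF weight] wint_smult)
qed

lemma Pa_endpoint_signs: "0 < poly (Pa w n a) 1" "0 < (-1) ^ n * poly (Pa w n a) (-1)"
proof -
  show "0 < poly (Pa w n a) 1"
  proof (cases a "0::real" rule: linorder_cases)
    case less
    then have "a * 2 * poly \<psi> 1 < 0" using phi_psi_endpoint_signs(2) by (simp add: mult_neg_pos)
    then show ?thesis using phi_psi_endpoint_signs(1) less by (simp add: poly_Pa)
  qed (use phi_psi_endpoint_signs(1) in \<open>simp_all add: poly_Pa\<close>)
  note \<phi> = interior_roots_endpoint_signs(2)[OF interior_roots_phi lead_coeff_phi]
  note \<psi> = interior_roots_endpoint_signs(2)[OF interior_roots_psi lead_coeff_psi]
  have "(-1::real) ^ n = - ((-1) ^ (n - 1))" using n_pos by (cases n) auto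
  then have "(-1) ^ n * poly (Pa w n a) (-1)
    = (-1) ^ n * poly \<phi> (-1) + a * (1 + sgn a) * ((-1) ^ (n - 1) * poly \<psi> (-1))"
    unfolding poly_Pa by (simp add: algebra_simps)
  moreover have "0 \<le> a * (1 + sgn a)" by (cases a "0::real" rule: linorder_cases) auto
  ultimately show "0 < (-1) ^ n * poly (Pa w n a) (-1)"
    using \<phi> \<psi> by (simp add: degree_phi degree_psi add_pos_nonneg)
qed

lemma interior_roots_Pa: "interior_roots (Pa w n a)"
proof (rule interior_rootsI[OF Pa_nonzero])
  have v: "weight_fun (\<lambda>t. poly [:1, sgn a:] t * w t)"
    by (intro weight_fun_poly_mult[OF weight]) (auto simp: sgn_if)
  have "wint (\<lambda>t. poly [:1, sgn a:] t * w t) (Pa w n a * q) = 0" if "degree q < n - 1" for q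
    using Pa_quasi_orth[OF that, of a] by (simp only: wint_mult_weight mult.assoc)
  then show "degree (Pa w n a) \<le> card (odd_roots (Pa w n a))"
    using card_odd_roots_ge_endpoints[OF v Pa_nonzero n_pos _ Pa_endpoint_signs]
    by (simp add: degree_Pa)
qed


section \<open>The Gauss, Radau and Lobatto rules\<close>

lemma zeros_phi: "finite (zeros \<phi>)" "zeros \<phi> \<subseteq> {-1<..<1}" "card (zeros \<phi>) = n"
  using interior_roots_zeros[OF interior_roots_phi] degree_phi by auto

lemma zeros_psi: "finite (zeros \<psi>)" "zeros \<psi> \<subseteq> {-1<..<1}" "card (zeros \<psi>) = n - 1"
  using interior_roots_zeros[OF interior_roots_psi] degree_psi by auto

lemma zeros_Pa:
  "finite (zeros (Pa w n a))" "zeros (Pa w n a) \<subseteq> {-1<..<1}" "card (zeros (Pa w n a)) = n"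
  using interior_roots_zeros[OF interior_roots_Pa] degree_Pa by auto

definition lobatto_nodes :: "real set" where
  "lobatto_nodes = zeros ([:1, 0, -1:] * \<psi>)"

definition radau_nodes :: "real \<Rightarrow> real set" where
  "radau_nodes a = insert (- sgn a) (zeros (Pa w n a))"

lemma lobatto_nodes_eq: "lobatto_nodes = insert (-1) (insert 1 (zeros \<psi>))"
  unfolding lobatto_nodes_def by (auto simp: poly_one_minus_square power2_eq_square square_eq_1_iff)

lemma lobatto_nodes: "finite lobatto_nodes" "lobatto_nodes \<subseteq> {-1..1}" "card lobatto_nodes = n + 1"
proof -
  have "-1 \<notin> zeros \<psi>" "1 \<notin> zeros \<psi>" using zeros_psi(2) by auto
  then show "finite lobatto_nodes" "lobatto_nodes \<subseteq> {-1..1}" "card lobatto_nodes = n + 1"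
    using zeros_psi n_pos unfolding lobatto_nodes_eq by auto
qed

lemma radau_nodes:
  assumes "a \<noteq> 0"
  shows "finite (radau_nodes a)" "radau_nodes a \<subseteq> {-1..1}" "card (radau_nodes a) = n + 1"
proof -
  have "- sgn a \<notin> zeros (Pa w n a)" "- sgn a \<in> {-1, 1}"
    using zeros_Pa(2)[of a] assms by (auto simp: sgn_if)
  then show "finite (radau_nodes a)" "radau_nodes a \<subseteq> {-1..1}" "card (radau_nodes a) = n + 1"
    using zeros_Pa[of a] unfolding radau_nodes_def by auto
qed

lemma node_sets_eq: "node_sets w n = {zeros \<phi>, lobatto_nodes} \<union> radau_nodes ` (- {0})"
proof -
  have R: "radau_nodes ` (- {0}) = {insert (-1) (zeros (Pa w n a)) | a. 0 < a}
      \<union> {insert 1 (zeros (Pa w n a)) | a. a < 0}"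
  proof (intro equalityI subsetI)
    fix S assume "S \<in> radau_nodes ` (- {0})"
    then obtain a where "a \<noteq> 0" "S = radau_nodes a" by auto
    then show "S \<in> {insert (-1) (zeros (Pa w n a)) | a. 0 < a}
        \<union> {insert 1 (zeros (Pa w n a)) | a. a < 0}"
      by (cases a "0::real" rule: linorder_cases) (auto simp: radau_nodes_def)
  next
    fix S
    assume "S \<in> {insert (-1) (zeros (Pa w n a)) | a. 0 < a}
      \<union> {insert 1 (zeros (Pa w n a)) | a. a < 0}"
    then consider a where "0 < a" "S = insert (-1) (zeros (Pa w n a))"
      | a where "a < 0" "S = insert 1 (zeros (Pa w n a))" by blast
    then show "S \<in> radau_nodes ` (- {0})"
    proof cases
      case (1 a)
      then have "S = radau_nodes a" by (simp add: radau_nodes_def)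
      then show ?thesis using 1 by blast
    next
      case (2 a)
      then have "S = radau_nodes a" by (simp add: radau_nodes_def)
      then show ?thesis using 2 by blast
    qed
  qed
  have "Pa w n 0 = \<phi>" by (simp add: Pa_eq)
  then show ?thesis unfolding node_sets_def lobatto_nodes_def R by (simp only: Un_assoc)
qed

lemma gauss_pos_quadrature: "pos_quadrature w n (zeros \<phi>) (interpolatory_weight w (zeros \<phi>))"
proof -
  have ex: "quadrature_exact w n (zeros \<phi>) (interpolatory_weight w (zeros \<phi>))"
    using zeros_phi n_pos phi_orth degree_phi
    by (intro interpolatory_quadrature_exact[OF weight, where D = \<phi>]) auto
  have "0 < interpolatory_weight w (zeros \<phi>) s" if s: "s \<in> zeros \<phi>" for s
    using zeros_phi s
    by (intro quadrature_weight_pos_factor[OF weight ex zeros_phi(1) s, where L = 1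
      and Q = "lagrange_basis (zeros \<phi>) s"])
      (auto simp: degree_lagrange_basis poly_lagrange_basis_other)
  then show ?thesis using ex zeros_phi(1) by (simp add: pos_quadrature_iff)
qed

lemma lobatto_exact: "quadrature_exact w n lobatto_nodes (interpolatory_weight w lobatto_nodes)"
proof (rule interpolatory_quadrature_exact[OF weight lobatto_nodes(1),
    where D = "[:1, 0, -1:] * \<psi>"])
  show "degree ([:1, 0, -1:] * \<psi>) = card lobatto_nodes"
    using degree_mult_eq[OF _ psi_nonzero, of "[:1, 0, -1:]"] degree_psi n_pos lobatto_nodes(3)
    by simp
  show "lobatto_nodes \<noteq> {}" by (simp add: lobatto_nodes_eq)
  show "\<And>s. s \<in> lobatto_nodes \<Longrightarrow> poly ([:1, 0, -1:] * \<psi>) s = 0"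
    by (simp add: lobatto_nodes_def)
  show "\<And>q. card lobatto_nodes + degree q \<le> 2 * n - 1 \<Longrightarrow> wint w ([:1, 0, -1:] * \<psi> * q) = 0"
    using lobatto_nodes(3) by (intro psi_orth) linarith
qed

lemma lobatto_pos_quadrature:
  "pos_quadrature w n lobatto_nodes (interpolatory_weight w lobatto_nodes)"
proof -
  let ?c = "interpolatory_weight w lobatto_nodes"
  note ex = lobatto_exact
  have \<psi>_endpoints: "poly \<psi> (-1) \<noteq> 0" "poly \<psi> 1 \<noteq> 0" using zeros_psi(2) by auto
  have "0 < ?c s" if s: "s \<in> lobatto_nodes" for s
  proof -
    note pos = quadrature_weight_pos_factor[OF weight ex lobatto_nodes(1) s]
    consider "s = -1" | "s = 1" | "s \<in> zeros \<psi>" using s lobatto_nodes_eq by auto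
    then show ?thesis
    proof cases
      case 1
      show ?thesis using 1 \<psi>_endpoints degree_psi n_pos
        by (intro pos[where L = "[:1, -1:]" and Q = \<psi>]) (auto simp: lobatto_nodes_eq)
    next
      case 2
      show ?thesis using 2 \<psi>_endpoints degree_psi n_pos
        by (intro pos[where L = "[:1, 1:]" and Q = \<psi>]) (auto simp: lobatto_nodes_eq)
    next
      case 3
      then have "1 \<le> card (zeros \<psi>)" using zeros_psi(1) card_0_eq by fastforce
      moreover have "\<bar>s\<bar> < 1" using 3 zeros_psi(2) by (auto simp: abs_less_iff)
      show ?thesis
      proof (rule pos[where L = "[:1, 0, -1:]" and Q = "lagrange_basis (zeros \<psi>) s"])
        show "0 < poly [:1, 0, -1:] s"
          unfolding poly_one_minus_square using \<open>\<bar>s\<bar> < 1\<close> by (simp add: abs_square_less_1)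
        show "0 \<le> poly [:1, 0, -1:] t" if "t \<in> {-1..1}" for t :: real
          using that by (rule poly_one_minus_square_nonneg)
      qed (use 3 zeros_psi \<open>1 \<le> card (zeros \<psi>)\<close> in
        \<open>auto simp: lobatto_nodes_eq degree_lagrange_basis
             poly_lagrange_basis_other poly_one_minus_square_nonneg\<close>)
    qed
  qed
  then show ?thesis using ex lobatto_nodes(1) by (simp add: pos_quadrature_iff)
qed


lemma radau_exact:
  assumes a: "a \<noteq> 0"
  shows "quadrature_exact w n (radau_nodes a) (interpolatory_weight w (radau_nodes a))"
proof (rule interpolatory_quadrature_exact[OF weight radau_nodes(1)[OF a],
    where D = "[:1, sgn a:] * Pa w n a"])
  have "degree [:1, sgn a:] = 1" using a by (simp add: sgn_0_0)
  then show "degree ([:1, sgn a:] * Pa w n a) = card (radau_nodes a)"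
    using degree_mult_eq[OF _ Pa_nonzero, of "[:1, sgn a:]" a] degree_Pa radau_nodes(3)[OF a]
    by force
  show "radau_nodes a \<noteq> {}" by (simp add: radau_nodes_def)
  have "poly [:1, sgn a:] (- sgn a) = 0" using a by (simp add: sgn_if)
  then show "\<And>s. s \<in> radau_nodes a \<Longrightarrow> poly ([:1, sgn a:] * Pa w n a) s = 0"
    by (auto simp: radau_nodes_def)
  show "\<And>q. card (radau_nodes a) + degree q \<le> 2 * n - 1 \<Longrightarrow> wint w ([:1, sgn a:] * Pa w n a * q) = 0"
    using radau_nodes(3)[OF a] by (intro Pa_quasi_orth) linarith
qed

lemma wint_linear_mult_psi_square_pos:
  assumes "\<bar>e\<bar> \<le> 1"
  shows "0 < wint w ([:1, e:] * \<psi> * \<psi>)"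
proof (rule wint_pos[OF weight])
  show "[:1, e:] * \<psi> * \<psi> \<noteq> 0" using psi_nonzero by (simp del: mult_pCons_left)
  show "0 \<le> poly ([:1, e:] * \<psi> * \<psi>) t" if "t \<in> {-1..1}" for t :: real
  proof -
    have "\<bar>t\<bar> \<le> 1" using that by auto
    then have "\<bar>e * t\<bar> \<le> 1" using assms by (simp add: abs_mult mult_le_one)
    then have "0 \<le> poly [:1, e:] t" by (simp add: abs_le_iff mult.commute)
    then show ?thesis by (simp only: poly_mult mult.assoc) (simp add: zero_le_square)
  qed
qed

text \<open>At the endpoint node \<open>e = -sgn a\<close> the rule applied to \<open>P\<^sub>a \<psi>\<close> gives
  \<open>c(e) P\<^sub>a(e) \<psi>(e) = -a \<integral> (1 - sgn a t) \<psi>\<^sup>2 w\<close>, whose sign is that of \<open>a P\<^sub>a(e) \<psi>(e)\<close>.\<close>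
lemma radau_endpoint_weight_pos:
  assumes a: "a \<noteq> 0"
  shows "0 < interpolatory_weight w (radau_nodes a) (- sgn a)"
proof -
  let ?e = "- sgn a" and ?c = "interpolatory_weight w (radau_nodes a)"
  have "?c ?e * poly (Pa w n a * \<psi>) ?e = wint w (Pa w n a * \<psi>)"
  proof (rule quadrature_weight_eq[OF radau_exact[OF a] radau_nodes(1)[OF a]])
    show "degree (Pa w n a * \<psi>) \<le> 2 * n - 1"
      using degree_mult_le[of "Pa w n a" \<psi>] degree_Pa degree_psi n_pos by simp
  qed (auto simp: radau_nodes_def)
  also have "\<dots> = - a * wint w ([:1, ?e:] * \<psi> * \<psi>)"
    using phi_orth[of \<psi>] degree_psi n_pos
    by (simp add: Pa_eq left_diff_distrib wint_diff[OF weight] wint_smult mult.assoc)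
  finally have eq: "?c ?e * (a * (poly (Pa w n a) ?e * poly \<psi> ?e))
      = - a\<^sup>2 * wint w ([:1, ?e:] * \<psi> * \<psi>)"
    by (simp add: power2_eq_square algebra_simps)
  have "0 < wint w ([:1, ?e:] * \<psi> * \<psi>)" by (rule wint_linear_mult_psi_square_pos) simp
  then have "- a\<^sup>2 * wint w ([:1, ?e:] * \<psi> * \<psi>) < 0" using a by simp
  moreover have "a * (poly (Pa w n a) ?e * poly \<psi> ?e) < 0"
  proof -
    have "a * (poly (Pa w n a) ?e * poly \<psi> ?e)
        = a * (poly \<phi> ?e * poly \<psi> ?e) - 2 * a\<^sup>2 * (poly \<psi> ?e)\<^sup>2"
      using a by (simp add: poly_Pa sgn_if power2_eq_square algebra_simps)
    moreover have "a * (poly \<phi> ?e * poly \<psi> ?e) < 0"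
      using phi_psi_endpoint_signs a
      by (cases a "0::real" rule: linorder_cases) (auto simp: mult_neg_pos mult_pos_neg)
    moreover have "0 \<le> 2 * a\<^sup>2 * (poly \<psi> ?e)\<^sup>2" by simp
    ultimately show ?thesis by linarith
  qed
  ultimately show ?thesis using eq by (metis mult_less_0_iff not_less_iff_gr_or_eq)
qed

lemma radau_pos_quadrature:
  assumes a: "a \<noteq> 0"
  shows "pos_quadrature w n (radau_nodes a) (interpolatory_weight w (radau_nodes a))"
proof -
  have "0 < interpolatory_weight w (radau_nodes a) s" if s: "s \<in> radau_nodes a" for s
  proof (cases "s = - sgn a")
    case True
    then show ?thesis using radau_endpoint_weight_pos[OF a] by simp
  next
    case False
    then have sZ: "s \<in> zeros (Pa w n a)" using s by (simp add: radau_nodes_def)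
    then have "\<bar>s\<bar> < 1" using zeros_Pa(2)[of a] by (auto simp: abs_less_iff)
    show ?thesis
    proof (rule quadrature_weight_pos_factor[OF weight radau_exact[OF a] radau_nodes(1)[OF a] s,
          where L = "[:1, sgn a:]" and Q = "lagrange_basis (zeros (Pa w n a)) s"])
      show "0 < poly [:1, sgn a:] s" using \<open>\<bar>s\<bar> < 1\<close> by (auto simp: sgn_if abs_less_iff)
      show "0 \<le> poly [:1, sgn a:] t" if "t \<in> {-1..1}" for t :: real
        using that by (auto simp: sgn_if)
      show "degree [:1, sgn a:] + 2 * degree (lagrange_basis (zeros (Pa w n a)) s) \<le> 2 * n - 1"
        using sZ zeros_Pa[of a] n_pos a
        by (auto simp: degree_lagrange_basis degree_pCons_eq_if sgn_0_0)
      have "poly [:1, sgn a:] (- sgn a) = 0" using a by (simp add: sgn_if)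
      then show "\<And>u. u \<in> radau_nodes a \<Longrightarrow> u \<noteq> s \<Longrightarrow>
          poly [:1, sgn a:] u = 0 \<or> poly (lagrange_basis (zeros (Pa w n a)) s) u = 0"
        using zeros_Pa(1) by (auto simp: radau_nodes_def poly_lagrange_basis_other)
    qed (use sZ zeros_Pa(1) in simp)
  qed
  then show ?thesis using radau_exact[OF a] radau_nodes(1)[OF a] by (simp add: pos_quadrature_iff)
qed


lemma node_sets_quadrature:
  assumes "S \<in> node_sets w n"
  shows "pos_quadrature w n S (interpolatory_weight w S)" "S \<subseteq> {-1..1}" "card S \<le> 2 * n"
proof -
  consider "S = zeros \<phi>" | "S = lobatto_nodes" | a where "a \<noteq> 0" "S = radau_nodes a"
    using assms by (auto simp: node_sets_eq)
  then have "pos_quadrature w n S (interpolatory_weight w S) \<and> S \<subseteq> {-1..1} \<and> card S \<le> 2 * n"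
    by cases (use gauss_pos_quadrature lobatto_pos_quadrature radau_pos_quadrature
      zeros_phi lobatto_nodes radau_nodes n_pos in auto)
  then show "pos_quadrature w n S (interpolatory_weight w S)" "S \<subseteq> {-1..1}" "card S \<le> 2 * n"
    by auto
qed

text \<open>A common zero \<open>x\<close> of \<open>\<phi>\<close> and \<open>\<psi> = (t - x) k\<close> would make the Lobatto rule, applied to
  \<open>\<phi> (1 + t) k\<close>, assign the weight zero to the node 1.\<close>
lemma phi_psi_no_common_zero:
  assumes "poly \<phi> x = 0" "poly \<psi> x = 0"
  shows False
proof -
  obtain k where k: "\<psi> = [:-x, 1:] * k" using assms(2) by (metis dvdE poly_eq_0_iff_dvd)
  have "k \<noteq> 0" using k psi_nonzero by auto
  then have "degree \<psi> = 1 + degree k" unfolding k by (subst degree_mult_eq) auto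
  then have deg_k: "degree k = n - 2" "2 \<le> n" using degree_psi by auto
  define g where "g = \<phi> * ([:1, 1:] * k)"
  let ?c = "interpolatory_weight w lobatto_nodes"
  have "?c 1 * poly g 1 = wint w g"
  proof (rule quadrature_weight_eq)
    show "quadrature_exact w n lobatto_nodes ?c" "finite lobatto_nodes" "1 \<in> lobatto_nodes"
      using lobatto_pos_quadrature by (auto simp: pos_quadrature_iff lobatto_nodes_eq)
    show "degree g \<le> 2 * n - 1"
      using degree_mult_le[of \<phi> "[:1, 1:] * k"] degree_linear_mult_le[of 1 1 k] deg_k degree_phi
      unfolding g_def by linarith
    show "poly g u = 0" if "u \<in> lobatto_nodes" "u \<noteq> 1" for u
      using that assms(1) k by (cases "u = x") (auto simp: g_def lobatto_nodes_eq)
  qed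
  also have "wint w g = 0" unfolding g_def
    using degree_linear_mult_le[of 1 1 k] deg_k by (intro phi_orth) linarith
  finally have "?c 1 * poly g 1 = 0" .
  moreover have "0 < ?c 1"
    using lobatto_pos_quadrature by (auto simp: pos_quadrature_iff lobatto_nodes_eq)
  moreover have "poly k 1 \<noteq> 0" using phi_psi_endpoint_signs(2) k by auto
  then have "poly g 1 \<noteq> 0" using phi_psi_endpoint_signs(1) by (simp add: g_def)
  ultimately show False by simp
qed

text \<open>The \<open>a\<close> with \<open>P\<^sub>a(x) = 0\<close>: as \<open>1 - sgn a \<cdot> x > 0\<close>, it has the sign of \<open>\<phi>(x) \<psi>(x)\<close>.\<close>
definition radau_parameter :: "real \<Rightarrow> real" where
  "radau_parameter x = poly \<phi> x / ((1 - sgn (poly \<phi> x * poly \<psi> x) * x) * poly \<psi> x)"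

definition node_set_of :: "real \<Rightarrow> real set" where
  "node_set_of x = (if poly \<phi> x = 0 then zeros \<phi> else if poly \<psi> x = 0 then lobatto_nodes
     else radau_nodes (radau_parameter x))"

lemma radau_nodes_member_iff:
  assumes "\<bar>x\<bar> < 1" "a \<noteq> 0"
  shows "x \<in> radau_nodes a \<longleftrightarrow> poly \<phi> x = a * (1 - sgn a * x) * poly \<psi> x"
  using assms by (auto simp: radau_nodes_def poly_Pa sgn_if)

lemma node_set_of:
  assumes x: "\<bar>x\<bar> < 1"
  shows "node_set_of x \<in> node_sets w n" "x \<in> node_set_of x"
proof -
  have "node_set_of x \<in> node_sets w n \<and> x \<in> node_set_of x"
  proof (cases "poly \<phi> x = 0 \<or> poly \<psi> x = 0")
    case True
    then show ?thesis using x by (auto simp: node_set_of_def node_sets_eq lobatto_nodes_eq)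
  next
    case False
    define a where "a = radau_parameter x"
    have "0 < 1 - sgn (poly \<phi> x * poly \<psi> x) * x" using x by (auto simp: sgn_if abs_less_iff)
    moreover have "a * ((1 - sgn (poly \<phi> x * poly \<psi> x) * x) * (poly \<psi> x)\<^sup>2) = poly \<phi> x * poly \<psi> x"
      using False calculation by (simp add: a_def radau_parameter_def power2_eq_square)
    ultimately have "sgn a = sgn (poly \<phi> x * poly \<psi> x)"
      using False by (metis mult.right_neutral sgn_mult sgn_pos zero_less_power2 zero_less_mult_iff)
    then have "a \<noteq> 0" using False by (auto simp: sgn_0_0)
    then have "x \<in> radau_nodes a"
      using False x \<open>sgn a = _\<close> by (simp add: radau_nodes_member_iff a_def radau_parameter_def)
    then show ?thesis using False \<open>a \<noteq> 0\<close> by (simp add: node_set_of_def node_sets_eq a_def)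
  qed
  then show "node_set_of x \<in> node_sets w n" "x \<in> node_set_of x" by auto
qed

lemma node_set_of_unique:
  assumes x: "\<bar>x\<bar> < 1" and S: "S \<in> node_sets w n" "x \<in> S"
  shows "S = node_set_of x"
proof -
  consider "S = zeros \<phi>" | "S = lobatto_nodes" | a where "a \<noteq> 0" "S = radau_nodes a"
    using S(1) by (auto simp: node_sets_eq)
  then show ?thesis
  proof cases
    case 1
    then show ?thesis using S(2) by (simp add: node_set_of_def)
  next
    case 2
    then have "poly \<psi> x = 0" using S(2) x by (auto simp: lobatto_nodes_eq)
    then show ?thesis using 2 phi_psi_no_common_zero by (auto simp: node_set_of_def)
  next
    case (3 a)
    have pos: "0 < 1 - sgn a * x" using x by (auto simp: sgn_if abs_less_iff)
    have e: "poly \<phi> x = a * (1 - sgn a * x) * poly \<psi> x"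
      using S(2) 3 x radau_nodes_member_iff by blast
    then have "poly \<psi> x \<noteq> 0" using phi_psi_no_common_zero by force
    then have "poly \<phi> x \<noteq> 0" "sgn (poly \<phi> x * poly \<psi> x) = sgn a"
      using e pos 3(1) by (auto simp: sgn_mult)
    moreover have "radau_parameter x = a"
      using calculation e pos \<open>poly \<psi> x \<noteq> 0\<close> by (simp add: radau_parameter_def)
    ultimately show ?thesis using 3 \<open>poly \<psi> x \<noteq> 0\<close> by (simp add: node_set_of_def)
  qed
qed

lemma lam_eq:
  assumes x: "\<bar>x\<bar> < 1"
  shows "lam w n x = interpolatory_weight w (node_set_of x) x"
  unfolding lam_def
proof (rule the_equality)
  show "\<exists>S c. S \<in> node_sets w n \<and> x \<in> S \<and> pos_quadrature w n S c
      \<and> c x = interpolatory_weight w (node_set_of x) x"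
    using node_set_of[OF x] node_sets_quadrature by blast
  fix l assume "\<exists>S c. S \<in> node_sets w n \<and> x \<in> S \<and> pos_quadrature w n S c \<and> c x = l"
  then obtain S c where S: "S \<in> node_sets w n" "x \<in> S" "pos_quadrature w n S c" "c x = l" by blast
  then show "l = interpolatory_weight w (node_set_of x) x"
    using node_set_of_unique[OF x S(1,2)] node_sets_quadrature(3)[OF S(1)]
      quadrature_weight_unique[of w n S c x] by (auto simp: pos_quadrature_iff)
qed

end

section \<open>A nonnegative polynomial built from the Dirichlet kernel\<close>

text \<open>With this indexing \<open>cheb_U k\<close> is the Chebyshev polynomial \<open>U\<^sub>k\<^sub>-\<^sub>1\<close> of the second kind.\<close>
fun cheb_T :: "nat \<Rightarrow> real poly" where
  "cheb_T 0 = 1"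
| "cheb_T (Suc 0) = [:0, 1:]"
| "cheb_T (Suc (Suc k)) = smult 2 ([:0, 1:] * cheb_T (Suc k)) - cheb_T k"

fun cheb_U :: "nat \<Rightarrow> real poly" where
  "cheb_U 0 = 0"
| "cheb_U (Suc 0) = 1"
| "cheb_U (Suc (Suc k)) = smult 2 ([:0, 1:] * cheb_U (Suc k)) - cheb_U k"

lemma poly_cheb_T_cos: "poly (cheb_T k) (cos t) = cos (real k * t)"
proof (induction k rule: cheb_T.induct)
  case (3 k)
  have "cos (real (Suc (Suc k)) * t) = 2 * cos t * cos (real (Suc k) * t) - cos (real k * t)"
    using cos_add[of "real (Suc k) * t" t] cos_diff[of "real (Suc k) * t" t]
    by (simp add: algebra_simps)
  then show ?case using 3 by simp
qed simp_all

lemma poly_cheb_U_cos: "poly (cheb_U k) (cos t) * sin t = sin (real k * t)"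
proof (induction k rule: cheb_U.induct)
  case (3 k)
  have "sin (real (Suc (Suc k)) * t) = 2 * cos t * sin (real (Suc k) * t) - sin (real k * t)"
    using sin_add[of "real (Suc k) * t" t] sin_diff[of "real (Suc k) * t" t]
    by (simp add: algebra_simps)
  then show ?case using 3 by (simp add: algebra_simps)
qed simp_all

lemma degree_cheb_T: "degree (cheb_T k) \<le> k"
  by (induction k rule: cheb_T.induct)
     (auto intro!: degree_diff_le order_trans[OF degree_smult_le] order_trans[OF degree_mult_le])

lemma degree_cheb_U: "degree (cheb_U k) \<le> k - 1"
  by (induction k rule: cheb_U.induct)
     (auto intro!: degree_diff_le order_trans[OF degree_smult_le] order_trans[OF degree_mult_le])

definition dirichlet_kernel :: "nat \<Rightarrow> real \<Rightarrow> real" where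
  "dirichlet_kernel r p = 1 + 2 * (\<Sum>k=1..r. cos (real k * p))"

lemma dirichlet_kernel_0: "dirichlet_kernel r 0 = 2 * real r + 1"
  unfolding dirichlet_kernel_def by simp

lemma abs_dirichlet_kernel_le: "\<bar>dirichlet_kernel r p\<bar> \<le> 2 * real r + 1"
proof -
  have "\<bar>\<Sum>k=1..r. cos (real k * p)\<bar> \<le> (\<Sum>k=1..r. 1)"
    by (rule order_trans[OF sum_abs sum_mono]) simp
  then show ?thesis unfolding dirichlet_kernel_def by simp
qed

lemma dirichlet_kernel_mult_sin:
  "dirichlet_kernel r p * sin (p / 2) = sin ((2 * real r + 1) * p / 2)"
proof (induction r)
  case (Suc r)
  have a: "(2 * real (Suc r) + 1) * p / 2 = real (Suc r) * p + p / 2"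
    and b: "(2 * real r + 1) * p / 2 = real (Suc r) * p - p / 2" by (simp_all add: algebra_simps)
  have "2 * cos (real (Suc r) * p) * sin (p / 2)
      = sin ((2 * real (Suc r) + 1) * p / 2) - sin ((2 * real r + 1) * p / 2)"
    unfolding a b sin_add sin_diff by simp
  moreover have "dirichlet_kernel (Suc r) p = dirichlet_kernel r p + 2 * cos (real (Suc r) * p)"
    unfolding dirichlet_kernel_def by (simp add: sum.cl_ivl_Suc algebra_simps)
  ultimately show ?case using Suc by (simp add: algebra_simps)
qed (simp add: dirichlet_kernel_def)

lemma dirichlet_kernel_periodic: "dirichlet_kernel r (p - 2 * pi) = dirichlet_kernel r p"
proof -
  have "cos (real k * (p - 2 * pi)) = cos (real k * p - 2 * real k * pi)" for k
    by (simp add: algebra_simps)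
  also have "cos (real k * p - 2 * real k * pi) = cos (real k * p)" for k
    by (simp only: cos_diff cos_2npi sin_2npi)
  finally show ?thesis by (simp add: dirichlet_kernel_def)
qed

text \<open>The splitting \<open>D(t \<mp> a) = A(cos t) \<plusminus> B(cos t) sin t\<close> into parts even and odd in \<open>t\<close>.\<close>
definition dirichlet_cos_poly :: "nat \<Rightarrow> real \<Rightarrow> real poly" where
  "dirichlet_cos_poly r a = 1 + smult 2 (\<Sum>k=1..r. smult (cos (real k * a)) (cheb_T k))"

definition dirichlet_sin_poly :: "nat \<Rightarrow> real \<Rightarrow> real poly" where
  "dirichlet_sin_poly r a = smult 2 (\<Sum>k=1..r. smult (sin (real k * a)) (cheb_U k))"

lemma poly_dirichlet_cos_poly:
  "poly (dirichlet_cos_poly r a) (cos t) = 1 + 2 * (\<Sum>k=1..r. cos (real k * a) * cos (real k * t))"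
  by (simp add: dirichlet_cos_poly_def poly_sum poly_cheb_T_cos)

lemma poly_dirichlet_sin_poly:
  "poly (dirichlet_sin_poly r a) (cos t) * sin t
    = 2 * (\<Sum>k=1..r. sin (real k * a) * sin (real k * t))"
  by (simp add: dirichlet_sin_poly_def poly_sum sum_distrib_right mult.assoc poly_cheb_U_cos)

lemma dirichlet_kernel_shift_cos:
  "dirichlet_kernel r (t - a)
    = poly (dirichlet_cos_poly r a) (cos t) + poly (dirichlet_sin_poly r a) (cos t) * sin t"
  "dirichlet_kernel r (t + a)
    = poly (dirichlet_cos_poly r a) (cos t) - poly (dirichlet_sin_poly r a) (cos t) * sin t"
  unfolding poly_dirichlet_cos_poly poly_dirichlet_sin_poly dirichlet_kernel_def
  by (simp_all add: right_diff_distrib distrib_left cos_diff cos_add sum.distrib sum_subtractf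
      algebra_simps)

lemma degree_dirichlet_cos_poly: "degree (dirichlet_cos_poly r a) \<le> r"
  unfolding dirichlet_cos_poly_def
  by (intro degree_add_le order_trans[OF degree_smult_le] degree_sum_le)
     (auto intro: order_trans[OF degree_smult_le] order_trans[OF degree_cheb_T])

lemma degree_dirichlet_sin_poly: "degree (dirichlet_sin_poly r a) \<le> r - 1"
  unfolding dirichlet_sin_poly_def
  by (intro order_trans[OF degree_smult_le] degree_sum_le)
     (auto intro: order_trans[OF degree_smult_le] order_trans[OF degree_cheb_U])

text \<open>\<open>bump_poly r a\<close> at \<open>cos t\<close> is \<open>D(t - a)\<^sup>4 + D(t + a)\<^sup>4\<close>, written as
  \<open>(A + B)\<^sup>4 + (A - B)\<^sup>4 = 2 A\<^sup>4 + 12 A\<^sup>2 B\<^sup>2 + 2 B\<^sup>4\<close> with \<open>B\<^sup>2\<close> a polynomial in \<open>cos t\<close>.\<close>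
definition bump_poly :: "nat \<Rightarrow> real \<Rightarrow> real poly" where
  "bump_poly r a = (let P = dirichlet_cos_poly r a; S = [:1, 0, -1:] * dirichlet_sin_poly r a ^ 2
     in smult 2 (P ^ 4) + smult 12 (P ^ 2 * S) + smult 2 (S ^ 2))"

lemma poly_bump_poly_cos:
  "poly (bump_poly r a) (cos t) = dirichlet_kernel r (t - a) ^ 4 + dirichlet_kernel r (t + a) ^ 4"
proof -
  define A where "A = poly (dirichlet_cos_poly r a) (cos t)"
  define B where "B = poly (dirichlet_sin_poly r a) (cos t) * sin t"
  have "poly ([:1, 0, -1:] * dirichlet_sin_poly r a ^ 2) (cos t) = B\<^sup>2"
    by (simp only: poly_mult poly_power poly_one_minus_square B_def)
       (simp add: power_mult_distrib sin_squared_eq mult.commute)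
  then have "poly (bump_poly r a) (cos t) = 2 * A ^ 4 + 12 * (A\<^sup>2 * B\<^sup>2) + 2 * (B\<^sup>2)\<^sup>2"
    by (simp add: bump_poly_def Let_def A_def)
  also have "\<dots> = (A + B) ^ 4 + (A - B) ^ 4"
    by (simp add: power2_eq_square power4_eq_xxxx algebra_simps)
  finally show ?thesis by (simp add: dirichlet_kernel_shift_cos A_def B_def)
qed

lemma degree_bump_poly: "degree (bump_poly r a) \<le> 4 * r"
proof -
  let ?P = "dirichlet_cos_poly r a" and ?S = "[:1, 0, -1:] * dirichlet_sin_poly r a ^ 2"
  have P: "degree (?P ^ k) \<le> r * k" for k
  proof -
    have "degree (?P ^ k) \<le> degree ?P * k" by (rule degree_power_le)
    also have "\<dots> \<le> r * k" using degree_dirichlet_cos_poly by (rule mult_le_mono1)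
    finally show ?thesis .
  qed
  have "degree ?S \<le> 2 * r"
  proof (cases "r = 0")
    case False
    have "degree ?S \<le> 2 + 2 * degree (dirichlet_sin_poly r a)"
      using degree_mult_le[of "[:1, 0, -1:]" "dirichlet_sin_poly r a ^ 2"]
        degree_power_le[of "dirichlet_sin_poly r a" 2] by simp
    then show ?thesis using degree_dirichlet_sin_poly[of r a] False by linarith
  qed (simp add: dirichlet_sin_poly_def)
  then have "degree (?P ^ 2 * ?S) \<le> 4 * r" "degree (?S ^ 2) \<le> 4 * r"
    using degree_mult_le[of "?P ^ 2" ?S] P[of 2] degree_power_le[of ?S 2] by linarith+
  then show ?thesis
    using P[of 4] unfolding bump_poly_def Let_def
    by (intro degree_add_le order_trans[OF degree_smult_le]) auto
qed

lemma bump_poly_nonneg: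
  assumes "t \<in> {-1..1}"
  shows "0 \<le> poly (bump_poly r a) t"
proof -
  have "cos (arccos t) = t" using assms by (simp add: cos_arccos)
  then have "poly (bump_poly r a) t
      = dirichlet_kernel r (arccos t - a) ^ 4 + dirichlet_kernel r (arccos t + a) ^ 4"
    using poly_bump_poly_cos[of r a "arccos t"] by simp
  then show ?thesis by (simp add: zero_le_even_power)
qed

lemma bump_poly_at_cos: "(2 * real r + 1) ^ 4 \<le> poly (bump_poly r a) (cos a)"
proof -
  have "poly (bump_poly r a) (cos a) = (2 * real r + 1) ^ 4 + dirichlet_kernel r (a + a) ^ 4"
    using poly_bump_poly_cos[of r a a] by (simp add: dirichlet_kernel_0)
  then show ?thesis by (simp add: zero_le_even_power)
qed

lemma sin_ge_quarter:
  fixes y :: real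
  assumes "0 \<le> y" "y \<le> pi / 2"
  shows "y / 4 \<le> sin y"
proof (cases "y \<le> pi / 3")
  case True
  have c: "1 / 2 \<le> cos y" using cos_monotone_0_pi_le[of y "pi / 3"] True assms cos_60 by simp
  have "\<bar>y\<bar> < pi / 2" using True assms pi_gt_zero by linarith
  then have "y \<le> \<bar>tan y\<bar>" using abs_tan_ge[of y] assms by simp
  also have "\<bar>tan y\<bar> = sin y / cos y" using c sin_ge_zero[of y] assms by (simp add: tan_def)
  finally have "y * cos y \<le> sin y" using c by (simp add: pos_le_divide_eq)
  moreover have "y * (1 / 2) \<le> y * cos y" using c assms by (intro mult_left_mono) auto
  ultimately show ?thesis using assms by linarith
next
  case False
  have "sin (pi / 3) \<le> sin y" using sin_monotone_2pi_le[of "pi / 3" y] False assms by simp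
  moreover have "1 / 2 \<le> sin (pi / 3)" unfolding sin_60 by simp
  moreover have "y / 4 \<le> 1 / 2" using assms pi_less_4 by simp
  ultimately show ?thesis by linarith
qed

lemma abs_sin_half_ge:
  fixes u :: real
  assumes "\<bar>u\<bar> \<le> pi"
  shows "\<bar>u\<bar> / 8 \<le> \<bar>sin (u / 2)\<bar>"
proof -
  have "\<bar>u\<bar> / 2 / 4 \<le> sin (\<bar>u\<bar> / 2)" using sin_ge_quarter[of "\<bar>u\<bar> / 2"] assms by simp
  also have "sin (\<bar>u\<bar> / 2) = \<bar>sin (u / 2)\<bar>"
    using sin_ge_zero[of "\<bar>u\<bar> / 2"] assms by (cases "0 \<le> u") auto
  finally show ?thesis by simp
qed

lemma abs_sin_le_shift:
  fixes t a :: real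
  assumes "0 \<le> sin a"
  shows "\<bar>sin t\<bar> \<le> sin a + 2 * \<bar>sin ((t - a) / 2)\<bar>"
proof -
  have "2 * ((t - a) / 2) = t - a" by simp
  then have "sin (t - a) = 2 * sin ((t - a) / 2) * cos ((t - a) / 2)"
    using sin_double[of "(t - a) / 2"] by metis
  then have "\<bar>sin (t - a)\<bar> = 2 * \<bar>sin ((t - a) / 2)\<bar> * \<bar>cos ((t - a) / 2)\<bar>"
    by (simp add: abs_mult)
  then have "\<bar>sin (t - a)\<bar> \<le> 2 * \<bar>sin ((t - a) / 2)\<bar>"
    using mult_left_le[of "\<bar>cos ((t - a) / 2)\<bar>" "2 * \<bar>sin ((t - a) / 2)\<bar>"] by simp
  moreover have "sin t = sin (t - a) * cos a + cos (t - a) * sin a"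
    using sin_add[of "t - a" a] by simp
  then have "\<bar>sin t\<bar> \<le> \<bar>sin (t - a)\<bar> * \<bar>cos a\<bar> + \<bar>cos (t - a)\<bar> * sin a"
    using assms by (metis abs_mult abs_of_nonneg abs_triangle_ineq)
  moreover have "\<bar>sin (t - a)\<bar> * \<bar>cos a\<bar> + \<bar>cos (t - a)\<bar> * sin a \<le> \<bar>sin (t - a)\<bar> + sin a"
    using assms by (intro add_mono mult_left_le mult_left_le_one_le) auto
  ultimately show ?thesis by linarith
qed

text \<open>With \<open>Q = D(p)\<^sup>2\<close> and \<open>s = \<bar>sin (p/2)\<bar>\<close> the hypotheses are \<open>\<bar>D\<bar> \<le> N\<close> and \<open>\<bar>D sin (p/2)\<bar> \<le> 1\<close>.\<close>
lemma kernel_decay_bounds: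
  fixes Q s N :: real
  assumes Q0: "0 \<le> Q" and QN: "Q \<le> N\<^sup>2" and Qs: "Q * s\<^sup>2 \<le> 1" and s0: "0 \<le> s" and N0: "0 < N"
  shows "Q\<^sup>2 * (1 + N\<^sup>2 * s\<^sup>2) \<le> 2 * N ^ 4" "s * Q\<^sup>2 * (1 + N\<^sup>2 * s\<^sup>2) \<le> 2 * N ^ 3"
proof -
  have "Q\<^sup>2 * (1 + N\<^sup>2 * s\<^sup>2) = Q\<^sup>2 + N\<^sup>2 * Q * (Q * s\<^sup>2)"
    by (simp add: power2_eq_square algebra_simps)
  also have "\<dots> \<le> N ^ 4 + N\<^sup>2 * N\<^sup>2 * 1"
  proof (rule add_mono)
    have "Q\<^sup>2 \<le> (N\<^sup>2)\<^sup>2" using Q0 QN by (intro power_mono) auto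
    then show "Q\<^sup>2 \<le> N ^ 4" by simp
    show "N\<^sup>2 * Q * (Q * s\<^sup>2) \<le> N\<^sup>2 * N\<^sup>2 * 1"
      using Q0 QN Qs s0 by (intro mult_mono) (auto intro: mult_nonneg_nonneg)
  qed
  finally show "Q\<^sup>2 * (1 + N\<^sup>2 * s\<^sup>2) \<le> 2 * N ^ 4" by (simp add: power2_eq_square power4_eq_xxxx)
  have "(s * Q)\<^sup>2 = Q * (Q * s\<^sup>2)" by (simp add: power2_eq_square)
  also have "\<dots> \<le> N\<^sup>2 * 1" using Q0 QN Qs by (intro mult_mono) auto
  finally have "(s * Q)\<^sup>2 \<le> N\<^sup>2" by simp
  then have sQ: "s * Q \<le> N" using N0 by (rule power2_le_imp_le[OF _ less_imp_le])
  have "s * Q\<^sup>2 * (1 + N\<^sup>2 * s\<^sup>2) = (s * Q) * Q + N\<^sup>2 * (Q * s\<^sup>2) * (s * Q)"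
    by (simp add: power2_eq_square algebra_simps)
  also have "\<dots> \<le> N * N\<^sup>2 + N\<^sup>2 * 1 * N"
    using sQ Q0 QN Qs s0 N0 by (intro add_mono mult_mono) (auto intro: mult_nonneg_nonneg)
  finally show "s * Q\<^sup>2 * (1 + N\<^sup>2 * s\<^sup>2) \<le> 2 * N ^ 3"
    by (simp add: power2_eq_square power3_eq_cube)
qed

lemma kernel_decay_ineq:
  fixes Q s \<sigma> N :: real
  assumes Q: "0 \<le> Q" "Q \<le> N\<^sup>2" "Q * s\<^sup>2 \<le> 1" and s: "0 \<le> s" and \<sigma>: "0 \<le> \<sigma>" and N: "0 < N"
  shows "(\<sigma> + 2 * s) * Q\<^sup>2 \<le> (2 * N ^ 4 * \<sigma> + 4 * N ^ 3) / (1 + N\<^sup>2 * s\<^sup>2)"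
proof -
  note bounds = kernel_decay_bounds[OF Q s N]
  have "(\<sigma> + 2 * s) * Q\<^sup>2 * (1 + N\<^sup>2 * s\<^sup>2)
      = \<sigma> * (Q\<^sup>2 * (1 + N\<^sup>2 * s\<^sup>2)) + 2 * (s * Q\<^sup>2 * (1 + N\<^sup>2 * s\<^sup>2))"
    by (simp add: algebra_simps)
  also have "\<dots> \<le> \<sigma> * (2 * N ^ 4) + 2 * (2 * N ^ 3)"
    using bounds \<sigma> by (intro add_mono mult_left_mono) auto
  finally have "(\<sigma> + 2 * s) * Q\<^sup>2 * (1 + N\<^sup>2 * s\<^sup>2) \<le> 2 * N ^ 4 * \<sigma> + 4 * N ^ 3"
    by (simp add: mult_ac)
  then show ?thesis by (simp add: pos_le_divide_eq add_pos_nonneg)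
qed

text \<open>A majorant of \<open>1 / (1 + N\<^sup>2 sin\<^sup>2 (u/2))\<close> on \<open>[-\<pi>, \<pi>]\<close> with integral \<open>O(1/N)\<close>.\<close>
definition lorentz :: "real \<Rightarrow> real \<Rightarrow> real" where
  "lorentz N u = 1 / (1 + (N * u / 8)\<^sup>2)"

lemma lorentz_nonneg: "0 \<le> lorentz N u"
  unfolding lorentz_def by (simp add: add_pos_nonneg)

lemma inverse_le_lorentz:
  fixes N s u :: real
  assumes "\<bar>u\<bar> / 8 \<le> s"
  shows "1 / (1 + N\<^sup>2 * s\<^sup>2) \<le> lorentz N u"
proof -
  have "(u / 8)\<^sup>2 \<le> s\<^sup>2" using assms power_mono[of "\<bar>u\<bar> / 8" s 2] by (simp add: power_divide)
  then have "1 + (N * u / 8)\<^sup>2 \<le> 1 + N\<^sup>2 * s\<^sup>2"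
    using mult_left_mono[of "(u / 8)\<^sup>2" "s\<^sup>2" "N\<^sup>2"] by (simp add: power_mult_distrib power_divide)
  then show ?thesis unfolding lorentz_def
    by (intro divide_left_mono) (auto intro!: mult_pos_pos add_pos_nonneg)
qed

lemma sin_mult_dirichlet_kernel_pow4_le:
  fixes r :: nat
  assumes a: "0 \<le> sin a" and t: "0 \<le> sin t" "\<bar>sin t\<bar> \<le> sin a + 2 * \<bar>sin (p / 2)\<bar>" and p: "\<bar>p\<bar> \<le> pi"
  defines "N \<equiv> 2 * real r + 1"
  shows "sin t * dirichlet_kernel r p ^ 4 \<le> (2 * N ^ 4 * sin a + 4 * N ^ 3) * lorentz N p"
proof -
  let ?D = "dirichlet_kernel r p" and ?s = "\<bar>sin (p / 2)\<bar>"
  have "sin t * ?D ^ 4 \<le> (sin a + 2 * ?s) * ?D ^ 4"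
    using t by (intro mult_right_mono) (auto simp: zero_le_even_power)
  also have "\<dots> = (sin a + 2 * ?s) * (?D\<^sup>2)\<^sup>2" by simp
  also have "\<dots> \<le> (2 * N ^ 4 * sin a + 4 * N ^ 3) / (1 + N\<^sup>2 * ?s\<^sup>2)"
  proof (rule kernel_decay_ineq)
    show "?D\<^sup>2 \<le> N\<^sup>2"
      unfolding N_def using power_mono[OF abs_dirichlet_kernel_le[of r p], of 2] by simp
    have "?D\<^sup>2 * ?s\<^sup>2 = (sin ((2 * real r + 1) * p / 2))\<^sup>2"
      using dirichlet_kernel_mult_sin[of r p] by (simp flip: power_mult_distrib)
    then show "?D\<^sup>2 * ?s\<^sup>2 \<le> 1" by (simp add: abs_square_le_1)
  qed (use a in \<open>auto simp: N_def\<close>)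
  also have "\<dots> = (2 * N ^ 4 * sin a + 4 * N ^ 3) * (1 / (1 + N\<^sup>2 * ?s\<^sup>2))" by simp
  also have "\<dots> \<le> (2 * N ^ 4 * sin a + 4 * N ^ 3) * lorentz N p"
    by (rule mult_left_mono[OF inverse_le_lorentz[OF abs_sin_half_ge[OF p]]])
       (use a in \<open>simp add: N_def\<close>)
  finally show ?thesis .
qed

text \<open>For \<open>t + a > \<pi>\<close> the second kernel is evaluated at the equivalent point \<open>t + a - 2\<pi>\<close>.\<close>
lemma sin_mult_bump_poly_le:
  fixes a t :: real and r :: nat
  assumes a: "0 < a" "a < pi" and t: "0 \<le> t" "t \<le> pi"
  defines "N \<equiv> 2 * real r + 1"
  shows "sin t * poly (bump_poly r a) (cos t)
    \<le> (2 * N ^ 4 * sin a + 4 * N ^ 3)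
      * (lorentz N (t - a) + lorentz N (t + a) + lorentz N (t + a - 2 * pi))"
proof -
  define C where "C = 2 * N ^ 4 * sin a + 4 * N ^ 3"
  have sa: "0 \<le> sin a" and st: "0 \<le> sin t" using a t by (auto intro: sin_ge_zero)
  have C: "0 \<le> C" unfolding C_def N_def using sa by simp
  have minus: "sin t * dirichlet_kernel r (t - a) ^ 4 \<le> C * lorentz N (t - a)"
    unfolding C_def N_def using a t
    by (intro sin_mult_dirichlet_kernel_pow4_le sa st abs_sin_le_shift) auto
  have e: "(- t - a) / 2 = - ((t + a) / 2)" by (simp add: diff_divide_distrib add_divide_distrib)
  have shift: "\<bar>sin t\<bar> \<le> sin a + 2 * \<bar>sin ((t + a) / 2)\<bar>"
    using abs_sin_le_shift[OF sa, of "- t"] unfolding e sin_minus abs_minus_cancel .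
  have plus: "sin t * dirichlet_kernel r (t + a) ^ 4
      \<le> C * (lorentz N (t + a) + lorentz N (t + a - 2 * pi))"
  proof (cases "t + a \<le> pi")
    case True
    then have "sin t * dirichlet_kernel r (t + a) ^ 4 \<le> C * lorentz N (t + a)"
      unfolding C_def N_def using a t shift by (intro sin_mult_dirichlet_kernel_pow4_le sa st) auto
    then show ?thesis using mult_nonneg_nonneg[OF C lorentz_nonneg, of N "t + a - 2 * pi"]
      by (simp add: distrib_left)
  next
    case False
    have "sin ((t + a - 2 * pi) / 2) = - sin ((t + a) / 2)"
      using sin_minus_pi[of "(t + a) / 2"] by (simp add: diff_divide_distrib)
    then have "sin t * dirichlet_kernel r (t + a - 2 * pi) ^ 4 \<le> C * lorentz N (t + a - 2 * pi)"
      unfolding C_def N_def using a t shift False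
      by (intro sin_mult_dirichlet_kernel_pow4_le sa st) auto
    then show ?thesis using mult_nonneg_nonneg[OF C lorentz_nonneg, of N "t + a"]
      by (simp add: dirichlet_kernel_periodic distrib_left)
  qed
  show ?thesis using add_mono[OF minus plus] unfolding poly_bump_poly_cos C_def
    by (simp add: distrib_left)
qed

lemma lorentz_shift_integral:
  fixes N c :: real
  assumes N: "0 < N"
  shows "(\<lambda>t. lorentz N (t + c)) integrable_on {0..pi}"
    "integral {0..pi} (\<lambda>t. lorentz N (t + c)) \<le> 8 * pi / N"
proof -
  let ?F = "\<lambda>t. 8 / N * arctan (N * (t + c) / 8)"
  have "(?F has_real_derivative lorentz N (t + c)) (at t within {0..pi})" for t
  proof -
    have "(?F has_real_derivative 8 / N * (inverse (1 + (N * (t + c) / 8)\<^sup>2) * (N * 1 / 8)))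
        (at t within {0..pi})"
      by (auto intro!: derivative_eq_intros DERIV_arctan[THEN DERIV_chain2])
    moreover have "8 / N * (inverse (1 + (N * (t + c) / 8)\<^sup>2) * (N * 1 / 8)) = lorentz N (t + c)"
      using N by (simp add: lorentz_def field_simps)
    ultimately show ?thesis by simp
  qed
  then have "((\<lambda>t. lorentz N (t + c)) has_integral ?F pi - ?F 0) {0..pi}"
    by (intro fundamental_theorem_of_calculus)
       (auto simp: has_real_derivative_iff_has_vector_derivative)
  moreover have "arctan (N * (pi + c) / 8) - arctan (N * (0 + c) / 8) \<le> pi"
    using arctan_ubound[of "N * (pi + c) / 8"] arctan_lbound[of "N * (0 + c) / 8"] by linarith
  then have "8 / N * (arctan (N * (pi + c) / 8) - arctan (N * (0 + c) / 8)) \<le> 8 / N * pi"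
    using N by (intro mult_left_mono) auto
  then have "?F pi - ?F 0 \<le> 8 / N * pi" by (simp only: right_diff_distrib)
  ultimately show "(\<lambda>t. lorentz N (t + c)) integrable_on {0..pi}"
    "integral {0..pi} (\<lambda>t. lorentz N (t + c)) \<le> 8 * pi / N"
    by (auto simp: integral_unique)
qed

lemma integral_cos_substitution:
  fixes p :: "real poly"
  shows "integral {-1..1} (poly p) = integral {0..pi} (\<lambda>t. sin t * poly p (cos t))"
proof -
  have "((\<lambda>x. (- sin x) *\<^sub>R poly p (cos x)) has_integral
      (integral {cos 0..cos pi} (poly p) - integral {cos pi..cos 0} (poly p))) {0..pi}"
    by (rule has_integral_substitution_general[of "{}" 0 pi cos "-1" 1 "poly p" "\<lambda>x. - sin x"])
       (auto intro!: derivative_eq_intros continuous_intros)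
  then have "((\<lambda>x. - (sin x * poly p (cos x))) has_integral (- integral {-1..1} (poly p))) {0..pi}"
    by simp
  then have "((\<lambda>x. - (- (sin x * poly p (cos x))))
      has_integral (- (- integral {-1..1} (poly p)))) {0..pi}"
    by (rule has_integral_neg)
  then show ?thesis by (simp add: integral_unique)
qed

lemma integral_bump_poly_le:
  fixes a :: real and r :: nat
  assumes a: "0 < a" "a < pi"
  defines "N \<equiv> 2 * real r + 1"
  shows "integral {-1..1} (poly (bump_poly r a)) \<le> (2 * N ^ 4 * sin a + 4 * N ^ 3) * (24 * pi / N)"
proof -
  define C where "C = 2 * N ^ 4 * sin a + 4 * N ^ 3"
  define L where "L t = lorentz N (t - a) + lorentz N (t + a) + lorentz N (t + (a - 2 * pi))" for t
  have N: "0 < N" unfolding N_def by (simp add: add_nonneg_pos)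
  note I1 = lorentz_shift_integral[OF N, of "- a", simplified]
    and I2 = lorentz_shift_integral[OF N, of a]
    and I3 = lorentz_shift_integral[OF N, of "a - 2 * pi"]
  have intL: "L integrable_on {0..pi}" unfolding L_def by (intro integrable_add I1(1) I2(1) I3(1))
  have bound: "integral {0..pi} L \<le> 24 * pi / N"
    using I1(2) I2(2) I3(2) unfolding L_def
    by (simp add: integral_add integrable_add I1(1) I2(1) I3(1))
  have C: "0 \<le> C" unfolding C_def using a N by (simp add: sin_ge_zero)
  have "integral {-1..1} (poly (bump_poly r a)) \<le> integral {0..pi} (\<lambda>t. C * L t)"
    unfolding integral_cos_substitution
  proof (rule integral_le)
    show "(\<lambda>t. sin t * poly (bump_poly r a) (cos t)) integrable_on {0..pi}"
      by (rule integrable_continuous_interval) (auto intro!: continuous_intros)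
    show "(\<lambda>t. C * L t) integrable_on {0..pi}" using integrable_on_cmult_left[OF intL, of C] by simp
    show "sin t * poly (bump_poly r a) (cos t) \<le> C * L t" if "t \<in> {0..pi}" for t
      using sin_mult_bump_poly_le[OF a, of t r] that unfolding C_def L_def N_def
      by (simp add: algebra_simps)
  qed
  also have "\<dots> = C * integral {0..pi} L" by simp
  also have "\<dots> \<le> C * (24 * pi / N)" using bound C by (rule mult_left_mono)
  finally show ?thesis unfolding C_def .
qed

section \<open>The weight bound\<close>

lemma lam_bound_arith:
  fixes l M s N Gx I :: real and n :: nat
  assumes M: "0 < M" and N: "0 < N" "real n \<le> 2 * N" and n: "1 \<le> n" and s: "0 \<le> s"
    and Gx: "N ^ 4 \<le> Gx" and lG: "l * Gx \<le> M * I"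
    and I: "I \<le> (2 * N ^ 4 * s + 4 * N ^ 3) * (24 * pi / N)"
  shows "l \<le> 1920 * M / real n * max s (1 / real n)"
proof -
  define T where "T = 24 * pi * (2 * s / N + 4 / N\<^sup>2)"
  have T: "0 \<le> T" unfolding T_def using N s by simp
  have "(2 * N ^ 4 * s + 4 * N ^ 3) * (24 * pi / N) = N ^ 4 * T"
    using N unfolding T_def
    by (simp add: field_simps power2_eq_square power3_eq_cube power4_eq_xxxx)
  then have "I \<le> N ^ 4 * T" using I by simp
  then have "l * Gx \<le> M * (N ^ 4 * T)" using lG M by (meson mult_left_mono order_trans less_imp_le)
  also have "\<dots> \<le> M * (Gx * T)" using Gx T M by (intro mult_left_mono mult_right_mono) auto
  finally have "l * Gx \<le> Gx * (M * T)" by (simp add: mult_ac)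
  moreover have "0 < Gx" using Gx N by (meson less_le_trans zero_less_power)
  ultimately have lT: "l \<le> M * T" by (simp add: mult.commute[of l] mult_le_cancel_left_pos)
  define m where "m = max s (1 / real n)"
  have n0: "0 < real n" using n by simp
  have iN: "1 / N \<le> 2 / real n" using N n0 by (simp add: field_simps)
  then have iN2: "1 / N\<^sup>2 \<le> 4 / (real n)\<^sup>2" using power_mono[OF iN, of 2] N
    by (simp add: power_divide)
  have "2 * s / N + 4 / N\<^sup>2 = 2 * s * (1 / N) + 4 * (1 / N\<^sup>2)" by simp
  also have "\<dots> \<le> 2 * s * (2 / real n) + 4 * (4 / (real n)\<^sup>2)"
    using iN iN2 s by (intro add_mono mult_left_mono) auto
  also have "\<dots> = (1 / real n) * (4 * s + 16 * (1 / real n))"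
    using n0 by (simp add: power2_eq_square field_simps)
  also have "\<dots> \<le> (1 / real n) * (20 * m)" unfolding m_def by (intro mult_left_mono) auto
  finally have "T \<le> 24 * pi * (20 * m / real n)" unfolding T_def by (intro mult_left_mono) auto
  also have "\<dots> \<le> 24 * 4 * (20 * m / real n)"
    using pi_less_4 s by (intro mult_right_mono) (auto simp: m_def)
  finally have "M * T \<le> M * (1920 * m / real n)" using M by (intro mult_left_mono) auto
  moreover have "M * (1920 * m / real n) = 1920 * M / real n * max s (1 / real n)"
    by (simp add: m_def)
  ultimately show ?thesis using lT by linarith
qed

context node_family
begin

lemma lam_mult_le:
  assumes M: "AE t in lborel. t \<in> {-1..1} \<longrightarrow> w t \<le> M" and x: "\<bar>x\<bar> < 1"
    and G: "degree G \<le> 2 * n - 1" "\<And>t. t \<in> {-1..1} \<Longrightarrow> 0 \<le> poly G t"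
  shows "lam w n x * poly G x \<le> M * integral {-1..1} (poly G)"
  using pos_quadrature_weight_le[OF weight M node_sets_quadrature(1,2)[OF node_set_of(1)[OF x]]
      node_set_of(2)[OF x] G]
  by (simp add: lam_eq[OF x])

lemma lam_le:
  assumes M: "AE t in lborel. t \<in> {-1..1} \<longrightarrow> w t \<le> M" and x: "\<bar>x\<bar> < 1"
  shows "lam w n x \<le> 1920 * M / real n * max (sqrt (1 - x\<^sup>2)) (1 / real n)"
proof -
  define r where "r = (n - 1) div 2"
  define N where "N = 2 * real r + 1"
  define a where "a = arccos x"
  have a: "0 < a" "a < pi" "cos a = x" "sin a = sqrt (1 - x\<^sup>2)"
    using arccos_lt_bounded[of x] x by (auto simp: a_def sin_arccos)
  have "degree (bump_poly r a) \<le> 2 * n - 1"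
    using degree_bump_poly[of r a] n_pos unfolding r_def by linarith
  then have lamG:
    "lam w n x * poly (bump_poly r a) x \<le> M * integral {-1..1} (poly (bump_poly r a))"
    by (rule lam_mult_le[OF M x _ bump_poly_nonneg])
  have "n \<le> 2 * (2 * r + 1)" unfolding r_def by presburger
  then have "real n \<le> real (2 * (2 * r + 1))" by (rule of_nat_mono)
  then have nN: "real n \<le> 2 * N" by (simp add: N_def)
  have "lam w n x \<le> 1920 * M / real n * max (sin a) (1 / real n)"
  proof (rule lam_bound_arith[OF weight_bound_pos[OF weight M] _ nN n_pos _ _ lamG])
    show "N ^ 4 \<le> poly (bump_poly r a) x" using bump_poly_at_cos[of r a] a(3) by (simp add: N_def)
    show "integral {-1..1} (poly (bump_poly r a))
        \<le> (2 * N ^ 4 * sin a + 4 * N ^ 3) * (24 * pi / N)"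
      using integral_bump_poly_le[OF a(1,2), of r] by (simp add: N_def)
  qed (use a(1,2) in \<open>auto simp: N_def sin_ge_zero add_pos_nonneg\<close>)
  then show ?thesis using a(4) by simp
qed

end

theorem lemma3p8:
  shows "\<exists>C>0. \<forall>(w::real \<Rightarrow> real) (M::real) (n::nat) (x::real).
    weight_fun w \<and> (AE t in lborel. t \<in> {-1..1} \<longrightarrow> w t \<le> M) \<and> n \<ge> 1 \<and> -1 < x \<and> x < 1
    \<longrightarrow> lam w n x \<le> C * M / real n * max (sqrt (1 - x^2)) (1 / real n)"
proof (intro exI[of _ 1920] conjI allI impI)
  fix w :: "real \<Rightarrow> real" and M :: real and n :: nat and x :: real
  assume "weight_fun w \<and> (AE t in lborel. t \<in> {-1..1} \<longrightarrow> w t \<le> M) \<and> n \<ge> 1 \<and> -1 < x \<and> x < 1"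
  then have w: "weight_fun w" and M: "AE t in lborel. t \<in> {-1..1} \<longrightarrow> w t \<le> M"
    and n: "1 \<le> n" and x: "\<bar>x\<bar> < 1" by auto
  interpret node_family w n using w n by unfold_locales
  show "lam w n x \<le> 1920 * M / real n * max (sqrt (1 - x\<^sup>2)) (1 / real n)"
    by (rule lam_le[OF M x])
qed simp

end
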